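(* Let $n\in\mathbb N$, let $A$ be a Young function satisfying (C1), (C2), (C3), let $B$ be the associated function, let $\varphi$ be a gauge function and let $\psi$ be the associated gauge function. Then the function $\Xi_{\psi,B}(r)=r\,\Theta_\psi\big(\Theta_{B^{-1}}(1/r)^+\big)$, $r>0$, is non-decreasing on $(0,\infty)$.
   Context: A gauge function is a function $\varphi\colon[0,\infty)\to[0,\infty)$ that is increasing, continuous and vanishes only at $0$, and (standing assumption) such that $r\mapsto\varphi(r)/r^n$ is non-increasing on $(0,\infty)$. A Young function is a non-trivial convex $A\colon[0,\infty)\to[0,\infty]$ with $A(0)=0$; $\widetilde A(t)=\sup_{\tau\ge0}(\tau t-A(\tau))$. Conditions: (C1) if $n=1$, $\lim_{t\to\infty}t/A(t)=0$; if $n\ge2$, $\int^\infty (t/A(t))^{1/(n-1)}dt<\infty$. (C2) $0<A(t)<\infty$ for $t>0$. (C3) if $n=1$, $\lim_{t\to0^+}t/A(t)=\infty$; if $n\ge2$, $\int_0(t/A(t))^{1/(n-1)}dt=\infty$. $B=A$ if $n=1$; for $n\ge2$, $B$ is the Young conjugate of $t\mapsto t^{n'}\int_t^\infty\widetilde A(s)s^{-1-n'}ds$, $n'=n/(n-1)$. $J(0)=0$, $J(s)=sB^{-1}(\varphi(s)/s^n)$ for $s>0$, $\psi(r)=\varphi(J^{-1}(r))$. For $h\colon(0,\infty)\to(0,\infty)$, $\Theta_h(r)=\sup_{t>0}h(rt)/h(t)$ for $r>0$, and $\Theta_h(a^+)=\lim_{\rho\to a^+}\Theta_h(\rho)$.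 *)

theory Defs
  imports "HOL-Analysis.Analysis"
begin

text \<open>Young function (real-valued on [0,inf); values of A off [0,inf) are irrelevant).
  Finite-valuedness is harmless since condition (C2) is assumed anyway.\<close>
definition young_fun :: "(real \<Rightarrow> real) \<Rightarrow> bool" where
  "young_fun A \<longleftrightarrow> convex_on {0..} A \<and> A 0 = 0 \<and> (\<forall>t\<ge>0. 0 \<le> A t) \<and> (\<exists>t>0. A t \<noteq> 0)"

definition young_conj :: "(real \<Rightarrow> ereal) \<Rightarrow> real \<Rightarrow> ereal" where
  "young_conj f t = (SUP \<tau>\<in>{0..}. ereal (\<tau> * t) - f \<tau>)"

definition cond_C1 :: "nat \<Rightarrow> (real \<Rightarrow> real) \<Rightarrow> bool" where
  "cond_C1 n A \<longleftrightarrow>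
     (if n = 1 then ((\<lambda>t. t / A t) \<longlongrightarrow> 0) at_top
      else (\<integral>\<^sup>+ t\<in>{1..}. ennreal ((t / A t) powr (1 / (real n - 1))) \<partial>lborel) < \<infinity>)"

definition cond_C2 :: "(real \<Rightarrow> real) \<Rightarrow> bool" where
  "cond_C2 A \<longleftrightarrow> (\<forall>t>0. 0 < A t)"

definition cond_C3 :: "nat \<Rightarrow> (real \<Rightarrow> real) \<Rightarrow> bool" where
  "cond_C3 n A \<longleftrightarrow>
     (if n = 1 then filterlim (\<lambda>t. t / A t) at_top (at_right 0)
      else (\<integral>\<^sup>+ t\<in>{0<..<1}. ennreal ((t / A t) powr (1 / (real n - 1))) \<partial>lborel) = \<infinity>)"

definition aux_E :: "nat \<Rightarrow> (real \<Rightarrow> real) \<Rightarrow> real \<Rightarrow> ereal" where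
  "aux_E n A t = (let n' = real n / (real n - 1) in
     ereal (t powr n') *
     enn2ereal (\<integral>\<^sup>+ s\<in>{t<..}. e2ennreal (young_conj (\<lambda>\<tau>. ereal (A \<tau>)) s)
                                  * ennreal (s powr (-1 - n')) \<partial>lborel))"

definition assoc_B :: "nat \<Rightarrow> (real \<Rightarrow> real) \<Rightarrow> real \<Rightarrow> ereal" where
  "assoc_B n A = (if n = 1 then (\<lambda>t. ereal (A t)) else young_conj (aux_E n A))"

definition young_inv :: "(real \<Rightarrow> ereal) \<Rightarrow> real \<Rightarrow> real" where
  "young_inv f s = Sup {t. 0 \<le> t \<and> f t \<le> ereal s}"

definition gauge_fun :: "nat \<Rightarrow> (real \<Rightarrow> real) \<Rightarrow> bool" where
  "gauge_fun n \<phi> \<longleftrightarrow> strict_mono_on {0..} \<phi> \<and> continuous_on {0..} \<phi> \<and> \<phi> 0 = 0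
     \<and> (\<forall>r>0. 0 < \<phi> r) \<and> antimono_on {0<..} (\<lambda>r. \<phi> r / r ^ n)"

definition J_fun :: "nat \<Rightarrow> (real \<Rightarrow> real) \<Rightarrow> (real \<Rightarrow> real) \<Rightarrow> real \<Rightarrow> real" where
  "J_fun n A \<phi> s = (if s = 0 then 0 else s * young_inv (assoc_B n A) (\<phi> s / s ^ n))"

definition assoc_psi :: "nat \<Rightarrow> (real \<Rightarrow> real) \<Rightarrow> (real \<Rightarrow> real) \<Rightarrow> real \<Rightarrow> real" where
  "assoc_psi n A \<phi> r = \<phi> (the_inv_into {0..} (J_fun n A \<phi>) r)"

definition Theta :: "(real \<Rightarrow> real) \<Rightarrow> real \<Rightarrow> ereal" where
  "Theta h r = (SUP t\<in>{0<..}. ereal (h (r * t) / h t))"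

definition Theta_right :: "(real \<Rightarrow> real) \<Rightarrow> real \<Rightarrow> ereal" where
  "Theta_right h a = Lim (at_right a) (Theta h)"

definition Xi :: "nat \<Rightarrow> (real \<Rightarrow> real) \<Rightarrow> (real \<Rightarrow> real) \<Rightarrow> real \<Rightarrow> ereal" where
  "Xi n A \<phi> r = ereal r * Theta_right (assoc_psi n A \<phi>)
                   (real_of_ereal (Theta (young_inv (assoc_B n A)) (1 / r)))"

end

theory Submission
  imports Defs
begin

text \<open>
  Let \<open>g = B\<^sup>-\<^sup>1\<close>. The key property is that \<open>B(t)/t\<^sup>n\<close> is non-decreasing: for \<open>n = 1\<close>
  by convexity of \<open>A\<close>, for \<open>n \<ge> 2\<close> dually from a scaling law of the function \<open>E\<close> whose
  Young conjugate is \<open>B\<close>. Hence \<open>g(\<lambda> w) \<le> \<lambda>\<^sup>1\<^sup>/\<^sup>n g(w)\<close> for \<open>\<lambda> \<ge> 1\<close>, and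
  \<open>J(s) = s g(\<phi>(s)/s\<^sup>n)\<close> satisfies \<open>J(s') \<ge> (\<phi>(s')/\<phi>(s))\<^sup>1\<^sup>/\<^sup>n J(s)\<close> for \<open>s \<le> s'\<close>, which
  makes \<open>\<psi> = \<phi> \<circ> J\<^sup>-\<^sup>1\<close> satisfy \<open>\<psi>(\<lambda> y) \<le> \<lambda>\<^sup>n \<psi>(y)\<close>. Both inequalities pass to \<open>\<Theta>\<close>; for
  \<open>r \<le> s\<close> they give \<open>\<Theta>\<^sub>g(1/r) \<le> (s/r)\<^sup>1\<^sup>/\<^sup>n \<Theta>\<^sub>g(1/s)\<close> and then
  \<open>\<Theta>\<^sub>\<psi>(\<Theta>\<^sub>g(1/r)\<^sup>+) \<le> (s/r) \<Theta>\<^sub>\<psi>(\<Theta>\<^sub>g(1/s)\<^sup>+)\<close>, i.e. \<open>\<Xi>(r) \<le> \<Xi>(s)\<close>.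

  To invert \<open>J\<close> one needs \<open>B(t) = o(t\<^sup>n)\<close> as \<open>t \<rightarrow> 0\<close>. For \<open>n \<ge> 2\<close> this comes from (C3),
  which by a Tonelli argument forces \<open>\<integral>\<^sub>0 \<tilde>A(s) s\<^sup>-\<^sup>1\<^sup>-\<^sup>n\<^sup>' ds = \<infinity>\<close>; Young's inequality
  then rules out \<open>B(t) > \<epsilon> t\<^sup>n\<close>.
\<close>

definition subhomogeneous :: "real \<Rightarrow> (real \<Rightarrow> real) \<Rightarrow> bool" where
  "subhomogeneous \<alpha> f \<longleftrightarrow> (\<forall>c\<ge>1. \<forall>x>0. f (c * x) \<le> c powr \<alpha> * f x)"

lemma subhomogeneousD:
  "subhomogeneous \<alpha> f \<Longrightarrow> 1 \<le> c \<Longrightarrow> 0 < x \<Longrightarrow> f (c * x) \<le> c powr \<alpha> * f x"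
  by (simp add: subhomogeneous_def)

lemma ratio_le_Theta: "0 < t \<Longrightarrow> ereal (h (\<rho> * t) / h t) \<le> Theta h \<rho>"
  unfolding Theta_def by (auto intro: SUP_upper)

text \<open>Here \<open>c / c\<close> is \<open>1\<close>, or \<open>0\<close> when \<open>c = 0\<close>.\<close>
lemma Theta_const:
  assumes "\<forall>t>0. h t = c" and "0 < \<rho>"
  shows "Theta h \<rho> = ereal (c / c)"
proof -
  have "Theta h \<rho> = (SUP t\<in>{0::real<..}. ereal (c / c))"
    unfolding Theta_def using assms by (intro SUP_cong) auto
  also have "\<dots> = ereal (c / c)" by (rule SUP_const) auto
  finally show ?thesis .
qed

lemma Theta_one:
  assumes "\<forall>t>0. 0 < h t"
  shows "Theta h 1 = 1"
proof -
  have "Theta h 1 = (SUP t\<in>{0::real<..}. 1)"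
    unfolding Theta_def using assms by (intro SUP_cong) (auto simp: one_ereal_def)
  also have "\<dots> = 1" by (rule SUP_const) auto
  finally show ?thesis .
qed

lemma Theta_mono:
  assumes pos: "\<forall>t>0. 0 < h t" and mono: "mono_on {0<..} h" and "0 < \<rho>" "\<rho> \<le> \<sigma>"
  shows "Theta h \<rho> \<le> Theta h \<sigma>"
  unfolding Theta_def
proof (rule SUP_mono)
  fix t :: real assume t: "t \<in> {0<..}"
  have "h (\<rho> * t) \<le> h (\<sigma> * t)"
    using assms t by (intro mono_onD[OF mono]) (auto intro: mult_right_mono)
  then have "h (\<rho> * t) / h t \<le> h (\<sigma> * t) / h t"
    using pos t by (intro divide_right_mono) auto
  then show "\<exists>m\<in>{0<..}. ereal (h (\<rho> * t) / h t) \<le> ereal (h (\<sigma> * m) / h m)"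
    using t by auto
qed

lemma Theta_pos:
  assumes "\<forall>t>0. 0 < h t" and "0 < \<rho>"
  shows "0 < Theta h \<rho>"
proof -
  have "0 < ereal (h (\<rho> * 1) / h 1)" using assms by simp
  also have "\<dots> \<le> Theta h \<rho>" by (rule ratio_le_Theta) simp
  finally show ?thesis .
qed

lemma Theta_subhomogeneous:
  assumes pos: "\<forall>t>0. 0 < h t" and "subhomogeneous \<alpha> h" "1 \<le> c" "0 < \<rho>"
  shows "Theta h (c * \<rho>) \<le> ereal (c powr \<alpha>) * Theta h \<rho>"
  unfolding Theta_def[of h "c * \<rho>"]
proof (rule SUP_least)
  fix t :: real assume t: "t \<in> {0<..}"
  have "h (c * \<rho> * t) \<le> c powr \<alpha> * h (\<rho> * t)"
    using subhomogeneousD[OF assms(2,3), of "\<rho> * t"] assms t by (simp add: mult.assoc)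
  then have "h (c * \<rho> * t) / h t \<le> c powr \<alpha> * h (\<rho> * t) / h t"
    using pos t by (intro divide_right_mono) auto
  then have "ereal (h (c * \<rho> * t) / h t) \<le> ereal (c powr \<alpha>) * ereal (h (\<rho> * t) / h t)"
    by simp
  also have "\<dots> \<le> ereal (c powr \<alpha>) * Theta h \<rho>"
    using t by (intro ereal_mult_left_mono ratio_le_Theta) auto
  finally show "ereal (h (c * \<rho> * t) / h t) \<le> ereal (c powr \<alpha>) * Theta h \<rho>" .
qed

lemma Theta_subhomogeneous_real:
  assumes pos: "\<forall>t>0. 0 < h t" and mono: "mono_on {0<..} h" and "subhomogeneous \<alpha> h" "0 < \<rho>"
  shows "\<exists>x>0. Theta h \<rho> = ereal x"
proof -
  have "Theta h \<rho> < \<infinity>"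
  proof (cases "\<rho> \<le> 1")
    case True
    then have "Theta h \<rho> \<le> 1" using assms Theta_one[OF pos] by (metis Theta_mono)
    also have "(1::ereal) < \<infinity>" by simp
    finally show ?thesis .
  next
    case False
    then have "Theta h (\<rho> * 1) \<le> ereal (\<rho> powr \<alpha>) * Theta h 1"
      using assms by (intro Theta_subhomogeneous) auto
    then have "Theta h \<rho> \<le> ereal (\<rho> powr \<alpha>)" using Theta_one[OF pos] by simp
    also have "\<dots> < \<infinity>" by simp
    finally show ?thesis .
  qed
  moreover have "0 < Theta h \<rho>" using Theta_pos[OF pos \<open>0 < \<rho>\<close>] .
  ultimately show ?thesis by (cases "Theta h \<rho>") auto
qed

lemma tendsto_at_right_Inf:
  fixes F :: "real \<Rightarrow> 'a::{complete_linorder, linorder_topology}"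
  assumes "mono_on {a<..} F"
  shows "(F \<longlongrightarrow> Inf (F ` {a<..})) (at_right a)"
proof (rule order_tendstoI)
  fix y assume "y < Inf (F ` {a<..})"
  then have "\<forall>x\<in>{a<..}. y < F x" by (auto dest: less_INF_D)
  then show "eventually (\<lambda>x. y < F x) (at_right a)"
    unfolding eventually_at_right_field by (intro exI[of _ "a + 1"]) auto
next
  fix y assume "Inf (F ` {a<..}) < y"
  then obtain x where x: "a < x" "F x < y" by (auto simp: Inf_less_iff)
  have "F z < y" if "a < z" "z < x" for z
    using mono_onD[OF assms, of z x] that x by auto
  then show "eventually (\<lambda>x. F x < y) (at_right a)"
    unfolding eventually_at_right_field using x by blast
qed

lemma Theta_right_eq_Inf:
  assumes "\<forall>t>0. 0 < h t" and "mono_on {0<..} h" and "0 \<le> a"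
  shows "Theta_right h a = Inf (Theta h ` {a<..})"
proof -
  have "mono_on {a<..} (Theta h)"
    by (rule monotone_onI) (use assms in \<open>auto intro: Theta_mono\<close>)
  then show ?thesis
    unfolding Theta_right_def by (intro tendsto_Lim tendsto_at_right_Inf) auto
qed

lemma Theta_right_mono:
  assumes "\<forall>t>0. 0 < h t" and "mono_on {0<..} h" and "0 \<le> a" "a \<le> b"
  shows "Theta_right h a \<le> Theta_right h b"
  using assms by (simp add: Theta_right_eq_Inf) (intro Inf_superset_mono image_mono, auto)

lemma Theta_right_subhomogeneous:
  assumes pos: "\<forall>t>0. 0 < h t" and mono: "mono_on {0<..} h" and sub: "subhomogeneous (1 / \<alpha>) h"
    and "0 < \<alpha>" "1 \<le> c" "0 \<le> b"
  shows "Theta_right h (c powr \<alpha> * b) \<le> ereal c * Theta_right h b"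
proof -
  have "ereal (1 / c) * Inf (Theta h ` {c powr \<alpha> * b<..}) \<le> Inf (Theta h ` {b<..})"
  proof (rule INF_greatest)
    fix \<rho> assume "\<rho> \<in> {b<..}"
    have "Inf (Theta h ` {c powr \<alpha> * b<..}) \<le> Theta h (c powr \<alpha> * \<rho>)"
      using \<open>\<rho> \<in> {b<..}\<close> \<open>1 \<le> c\<close> by (intro INF_lower) auto
    also have "\<dots> \<le> ereal ((c powr \<alpha>) powr (1 / \<alpha>)) * Theta h \<rho>"
      using assms \<open>\<rho> \<in> {b<..}\<close> by (intro Theta_subhomogeneous[OF pos sub]) (auto simp: ge_one_powr_ge_zero)
    also have "(c powr \<alpha>) powr (1 / \<alpha>) = c"
      using assms by (simp add: powr_powr)
    finally have "ereal (1 / c) * Inf (Theta h ` {c powr \<alpha> * b<..}) \<le> ereal (1 / c) * (ereal c * Theta h \<rho>)"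
      using assms by (intro ereal_mult_left_mono) auto
    also have "\<dots> = Theta h \<rho>"
      using assms by (simp flip: mult.assoc)
    finally show "ereal (1 / c) * Inf (Theta h ` {c powr \<alpha> * b<..}) \<le> Theta h \<rho>" .
  qed
  then have "ereal (1 / c) * Theta_right h (c powr \<alpha> * b) \<le> Theta_right h b"
    using assms by (simp add: Theta_right_eq_Inf[OF pos mono])
  then have "ereal c * (ereal (1 / c) * Theta_right h (c powr \<alpha> * b)) \<le> ereal c * Theta_right h b"
    using assms by (intro ereal_mult_left_mono) auto
  then show ?thesis
    using assms by (simp flip: mult.assoc)
qed

lemma Theta_right_const:
  assumes "\<forall>t>0. h t = c" and "0 \<le> a"
  shows "Theta_right h a = ereal (c / c)"
  unfolding Theta_right_def
proof (rule tendsto_Lim)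
  have "eventually (\<lambda>\<rho>. Theta h \<rho> = ereal (c / c)) (at_right a)"
    unfolding eventually_at_right_field using assms Theta_const[of h c]
    by (intro exI[of _ "a + 1"]) auto
  then show "(Theta h \<longlongrightarrow> ereal (c / c)) (at_right a)"
    by (rule tendsto_eventually)
qed simp

definition Xi_of :: "(real \<Rightarrow> real) \<Rightarrow> (real \<Rightarrow> real) \<Rightarrow> real \<Rightarrow> ereal" where
  "Xi_of g \<psi> r = ereal r * Theta_right \<psi> (real_of_ereal (Theta g (1 / r)))"

lemma mono_on_Xi_of:
  assumes "0 < \<alpha>"
    and g_pos: "\<forall>t>0. 0 < g t" and g_mono: "mono_on {0<..} g" and g_sub: "subhomogeneous \<alpha> g"
    and \<psi>_pos: "\<forall>t>0. 0 < \<psi> t" and \<psi>_mono: "mono_on {0<..} \<psi>"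
    and \<psi>_sub: "subhomogeneous (1 / \<alpha>) \<psi>"
  shows "mono_on {0<..} (Xi_of g \<psi>)"
proof (rule monotone_onI)
  fix r s :: real assume "r \<in> {0<..}" "s \<in> {0<..}" "r \<le> s"
  then have rs: "0 < r" "r \<le> s" by auto
  obtain a where a: "0 < a" "Theta g (1 / r) = ereal a"
    using Theta_subhomogeneous_real[OF g_pos g_mono g_sub, of "1 / r"] rs by auto
  obtain b where b: "0 < b" "Theta g (1 / s) = ereal b"
    using Theta_subhomogeneous_real[OF g_pos g_mono g_sub, of "1 / s"] rs by auto
  have "Theta g (s / r * (1 / s)) \<le> ereal ((s / r) powr \<alpha>) * Theta g (1 / s)"
    using rs by (intro Theta_subhomogeneous[OF g_pos g_sub]) auto
  then have "a \<le> (s / r) powr \<alpha> * b" using rs a b by simp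
  \<comment> \<open>the scalings of \<open>g\<close> and \<open>\<psi>\<close> have reciprocal degrees, so the factor \<open>(s/r)\<^sup>\<alpha>\<close> becomes \<open>s / r\<close>\<close>
  then have "Theta_right \<psi> a \<le> Theta_right \<psi> ((s / r) powr \<alpha> * b)"
    using a by (intro Theta_right_mono[OF \<psi>_pos \<psi>_mono]) auto
  also have "\<dots> \<le> ereal (s / r) * Theta_right \<psi> b"
    using rs b \<open>0 < \<alpha>\<close> by (intro Theta_right_subhomogeneous[OF \<psi>_pos \<psi>_mono \<psi>_sub]) auto
  finally have "Theta_right \<psi> a \<le> ereal (s / r) * Theta_right \<psi> b" .
  then have "ereal r * Theta_right \<psi> a \<le> ereal r * (ereal (s / r) * Theta_right \<psi> b)"
    using rs by (intro ereal_mult_left_mono) auto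
  then show "Xi_of g \<psi> r \<le> Xi_of g \<psi> s"
    using rs a b by (simp add: Xi_of_def flip: mult.assoc)
qed

definition J_of :: "nat \<Rightarrow> (real \<Rightarrow> real) \<Rightarrow> (real \<Rightarrow> real) \<Rightarrow> real \<Rightarrow> real" where
  "J_of n g \<phi> s = (if s = 0 then 0 else s * g (\<phi> s / s ^ n))"

definition psi_of :: "nat \<Rightarrow> (real \<Rightarrow> real) \<Rightarrow> (real \<Rightarrow> real) \<Rightarrow> real \<Rightarrow> real" where
  "psi_of n g \<phi> r = \<phi> (the_inv_into {0..} (J_of n g \<phi>) r)"

lemma powr_inverse_power:
  fixes x :: real
  assumes "0 \<le> x" "1 \<le> n"
  shows "(x ^ n) powr (1 / real n) = x"
  using assms by (cases "x = 0") (simp_all add: powr_realpow [symmetric] powr_powr)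

locale gauge_inversion =
  fixes n :: nat and g \<phi> :: "real \<Rightarrow> real"
  assumes n: "1 \<le> n"
    and g_pos: "\<forall>w>0. 0 < g w" and g_mono: "mono_on {0<..} g"
    and g_sub: "subhomogeneous (1 / real n) g" and g_cont: "continuous_on {0<..} g"
    and g_root: "filterlim (\<lambda>w. g w / w powr (1 / real n)) at_top (at_right 0)"
    and gauge: "gauge_fun n \<phi>"
begin

abbreviation J :: "real \<Rightarrow> real" where "J \<equiv> J_of n g \<phi>"
abbreviation psi :: "real \<Rightarrow> real" where "psi \<equiv> psi_of n g \<phi>"
abbreviation Jinv :: "real \<Rightarrow> real" where "Jinv \<equiv> the_inv_into {0..} J"

definition phi_ratio :: "real \<Rightarrow> real" where "phi_ratio s = \<phi> s / s ^ n"

lemma phi_pos: "0 < s \<Longrightarrow> 0 < \<phi> s"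
  and phi_zero: "\<phi> 0 = 0"
  and phi_cont: "continuous_on {0..} \<phi>"
  using gauge by (auto simp: gauge_fun_def)

lemma phi_less: "0 \<le> x \<Longrightarrow> x < y \<Longrightarrow> \<phi> x < \<phi> y"
  using gauge unfolding gauge_fun_def strict_mono_on_def by auto

lemma phi_ratio_pos: "0 < s \<Longrightarrow> 0 < phi_ratio s"
  using phi_pos by (simp add: phi_ratio_def)

lemma phi_ratio_antimono: "0 < x \<Longrightarrow> x \<le> y \<Longrightarrow> phi_ratio y \<le> phi_ratio x"
  using gauge unfolding gauge_fun_def monotone_on_def phi_ratio_def by auto

lemma J_eq: "0 < s \<Longrightarrow> J s = s * g (phi_ratio s)"
  by (simp add: J_of_def phi_ratio_def)

lemma J_zero: "J 0 = 0"
  by (simp add: J_of_def)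

lemma J_pos: "0 < s \<Longrightarrow> 0 < J s"
  using g_pos phi_ratio_pos by (simp add: J_eq)

lemma g_le_ratio: "0 < w \<Longrightarrow> w \<le> w' \<Longrightarrow> g w' \<le> (w' / w) powr (1 / real n) * g w"
  using subhomogeneousD[OF g_sub, of "w' / w" w] by simp

lemma J_growth:
  assumes "0 < s" "s \<le> s'"
  shows "(\<phi> s' / \<phi> s) powr (1 / real n) * J s \<le> J s'"
proof -
  let ?e = "1 / real n"
  have s': "0 < s'" using assms by simp
  have u: "0 < phi_ratio s'" "phi_ratio s' \<le> phi_ratio s"
    using phi_ratio_pos[OF s'] phi_ratio_antimono[OF assms] by auto
  have ratio: "phi_ratio s' / phi_ratio s = (\<phi> s' / \<phi> s) * (s / s') ^ n"
    using assms phi_pos[of s] by (simp add: phi_ratio_def field_simps power_divide)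
  have "(phi_ratio s' / phi_ratio s) powr ?e = (\<phi> s' / \<phi> s) powr ?e * ((s / s') ^ n) powr ?e"
    unfolding ratio by (rule powr_mult)
  also have "((s / s') ^ n) powr ?e = s / s'"
    using assms n by (intro powr_inverse_power) auto
  finally have "(phi_ratio s' / phi_ratio s) powr ?e = (\<phi> s' / \<phi> s) powr ?e * (s / s')" .
  then have "(\<phi> s' / \<phi> s) powr ?e * J s = s' * ((phi_ratio s' / phi_ratio s) powr ?e * g (phi_ratio s))"
    using assms by (simp add: J_eq)
  also have "\<dots> \<le> s' * ((phi_ratio s' / phi_ratio s) powr ?e * ((phi_ratio s / phi_ratio s') powr ?e * g (phi_ratio s')))"
    using u s' by (intro mult_left_mono g_le_ratio) auto
  also have "\<dots> = J s'"
    using u s' by (simp add: J_eq powr_mult[symmetric])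
  finally show ?thesis .
qed

lemma J_less: "0 \<le> s \<Longrightarrow> s < s' \<Longrightarrow> J s < J s'"
proof (cases "s = 0")
  case False
  assume s: "0 \<le> s" "s < s'"
  with False have "0 < s" by simp
  have "1 < (\<phi> s' / \<phi> s) powr (1 / real n)"
    using phi_less[OF s] phi_pos[OF \<open>0 < s\<close>] n by (intro gr_one_powr) auto
  then have "J s < (\<phi> s' / \<phi> s) powr (1 / real n) * J s" using J_pos[OF \<open>0 < s\<close>] by simp
  also have "\<dots> \<le> J s'" using J_growth \<open>0 < s\<close> s by simp
  finally show ?thesis .
qed (simp add: J_zero J_pos)

lemma J_continuous: "continuous_on {0<..} J"
proof -
  have "continuous_on {0<..} \<phi>" using phi_cont by (rule continuous_on_subset) auto
  then have "continuous_on {0<..} phi_ratio"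
    unfolding phi_ratio_def by (intro continuous_intros) auto
  then have "continuous_on {0<..} (\<lambda>s. s * g (phi_ratio s))"
    using phi_ratio_pos by (intro continuous_intros continuous_on_compose2[OF g_cont]) auto
  then show ?thesis by (rule continuous_on_cong[THEN iffD1, rotated 2]) (auto simp: J_eq)
qed

lemma J_small: assumes "0 < y" shows "\<exists>e>0. J e < y"
proof -
  define C where "C = g (\<phi> 1) / \<phi> 1 powr (1 / real n)"
  have C: "0 < C" using g_pos phi_pos[of 1] by (simp add: C_def)
  have bound: "J s \<le> C * \<phi> s powr (1 / real n)" if "0 < s" "s \<le> 1" for s
  proof -
    have "(\<phi> 1 / \<phi> s) powr (1 / real n) * J s \<le> g (\<phi> 1)"
      using J_growth[OF that] by (simp add: J_of_def)
    then show ?thesis using phi_pos[of 1] phi_pos[OF that(1)]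
      by (simp add: C_def powr_divide field_simps)
  qed
  have "(\<phi> \<longlongrightarrow> \<phi> 0) (at 0 within {0..})"
    using phi_cont by (simp add: continuous_on_def)
  then have "(\<phi> \<longlongrightarrow> 0) (at_right 0)"
    unfolding phi_zero by (rule tendsto_within_subset) auto
  moreover have "0 < (y / C) powr real n" using assms C by simp
  ultimately have "eventually (\<lambda>s. \<phi> s < (y / C) powr real n) (at_right 0)"
    by (rule order_tendstoD)
  then obtain b where b: "0 < b" "\<And>s. 0 < s \<Longrightarrow> s < b \<Longrightarrow> \<phi> s < (y / C) powr real n"
    unfolding eventually_at_right_field by auto
  define e where "e = min (b / 2) 1"
  have e: "0 < e" "e < b" "e \<le> 1" using b by (auto simp: e_def)
  have "\<phi> e powr (1 / real n) < ((y / C) powr real n) powr (1 / real n)"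
    using b(2)[OF e(1,2)] phi_pos[OF e(1)] n by (intro powr_less_mono2) auto
  also have "\<dots> = y / C" using n assms C by (simp add: powr_powr)
  finally have "C * \<phi> e powr (1 / real n) < y" using C by (simp add: field_simps)
  then show ?thesis using bound[OF e(1,3)] e by (intro exI[of _ e]) auto
qed

lemma g_above_root:
  assumes "0 < K"
  obtains w0 where "0 < w0" "\<And>w. 0 < w \<Longrightarrow> w < w0 \<Longrightarrow> K * w powr (1 / real n) \<le> g w"
proof -
  have "eventually (\<lambda>w. K \<le> g w / w powr (1 / real n)) (at_right 0)"
    using g_root by (simp add: filterlim_at_top)
  then obtain w0 where "0 < w0" "\<And>w. 0 < w \<Longrightarrow> w < w0 \<Longrightarrow> K \<le> g w / w powr (1 / real n)"
    unfolding eventually_at_right_field by auto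
  then show ?thesis by (intro that[of w0]) (auto simp: field_simps)
qed

lemma J_large: assumes "0 < M" shows "\<exists>s>0. M \<le> J s"
proof -
  let ?e = "1 / real n"
  define K where "K = M / \<phi> 1 powr ?e"
  have K: "0 < K" using assms phi_pos[of 1] by (simp add: K_def)
  obtain w0 where w0: "0 < w0" "\<And>w. 0 < w \<Longrightarrow> w < w0 \<Longrightarrow> K * w powr ?e \<le> g w"
    using g_above_root[OF K] by blast
  define D where "D = (w0 / \<phi> 1) powr ?e * g (\<phi> 1)"
  have D: "0 < D" using w0 g_pos phi_pos[of 1] by (simp add: D_def)
  define s where "s = max 1 (M / D)"
  have "M / D \<le> s" by (simp add: s_def)
  then have s: "1 \<le> s" "M \<le> s * D" using D by (auto simp: pos_divide_le_eq, simp add: s_def)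
  have u: "0 < phi_ratio s" "phi_ratio s \<le> phi_ratio 1" "phi_ratio 1 = \<phi> 1"
    using phi_ratio_pos phi_ratio_antimono[of 1 s] s by (auto simp: phi_ratio_def)
  have "M \<le> J s"
  proof (cases "phi_ratio s < w0")
    case True
    \<comment> \<open>\<open>J s = s g(\<phi> s / s\<^sup>n) \<ge> K s (\<phi> s / s\<^sup>n)\<^sup>1\<^sup>/\<^sup>n = K \<phi>(s)\<^sup>1\<^sup>/\<^sup>n \<ge> K \<phi>(1)\<^sup>1\<^sup>/\<^sup>n\<close>\<close>
    have "M = K * \<phi> 1 powr ?e" using phi_pos[of 1] by (simp add: K_def)
    also have "\<dots> \<le> K * \<phi> s powr ?e"
      using phi_less[of 1 s] s phi_pos[of 1] K
      by (cases "s = 1") (auto intro: mult_left_mono powr_mono2)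
    also have "\<phi> s powr ?e = s * phi_ratio s powr ?e"
      using s n phi_pos[of s] by (simp add: phi_ratio_def powr_divide powr_inverse_power)
    also have "K * (s * phi_ratio s powr ?e) = s * (K * phi_ratio s powr ?e)"
      by (rule mult.left_commute)
    also have "\<dots> \<le> J s"
      using w0(2)[OF u(1) True] s by (simp add: J_eq)
    finally show ?thesis .
  next
    case False
    have "g (\<phi> 1) \<le> (\<phi> 1 / phi_ratio s) powr ?e * g (phi_ratio s)"
      using g_le_ratio u by simp
    then have "(phi_ratio s / \<phi> 1) powr ?e * g (\<phi> 1) \<le> g (phi_ratio s)"
      using u phi_pos[of 1] by (simp add: powr_divide field_simps)
    moreover have "(w0 / \<phi> 1) powr ?e \<le> (phi_ratio s / \<phi> 1) powr ?e"
      using False w0 phi_pos[of 1] by (intro powr_mono2) (auto simp: divide_right_mono)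
    ultimately have "D \<le> g (phi_ratio s)"
      unfolding D_def using g_pos phi_pos[of 1] by (smt (verit) mult_right_mono)
    then have "s * D \<le> J s" using s by (simp add: J_eq)
    then show ?thesis using s by simp
  qed
  then show ?thesis using s by (intro exI[of _ s]) auto
qed

lemma J_bij: "bij_betw J {0..} {0..}"
proof (rule bij_betw_imageI)
  show "inj_on J {0..}"
    by (rule strict_mono_on_imp_inj_on) (auto simp: strict_mono_on_def J_less)
  show "J ` {0..} = {0..}"
  proof (intro equalityI subsetI)
    fix y :: real assume "y \<in> {0..}"
    show "y \<in> J ` {0..}"
    proof (cases "y = 0")
      case True then show ?thesis using J_zero by force
    next
      case False
      then have y: "0 < y" using \<open>y \<in> {0..}\<close> by simp
      obtain e where e: "0 < e" "J e < y" using J_small[OF y] by blast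
      obtain S where S: "0 < S" "y \<le> J S" using J_large[OF y] by blast
      have "e \<le> S" using e S J_less[of S e] by force
      have "continuous_on {e..S} J" using J_continuous by (rule continuous_on_subset) (use e in auto)
      then obtain x where "e \<le> x" "x \<le> S" "J x = y" using IVT'[of J e y S] e S \<open>e \<le> S\<close> by auto
      then show ?thesis using e by force
    qed
  qed (use J_pos J_zero in \<open>force simp: le_less\<close>)
qed

lemma Jinv: "0 \<le> y \<Longrightarrow> 0 \<le> Jinv y \<and> J (Jinv y) = y"
  using J_bij the_inv_into_into[of J "{0..}" y "{0..}"] f_the_inv_into_f[of J "{0..}" y]
  by (auto simp: bij_betw_def)

lemma Jinv_pos: "0 < y \<Longrightarrow> 0 < Jinv y"
  using Jinv[of y] J_zero by (cases "Jinv y = 0") auto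

lemma Jinv_mono: "0 \<le> x \<Longrightarrow> x \<le> y \<Longrightarrow> Jinv x \<le> Jinv y"
  using Jinv[of x] Jinv[of y] J_less[of "Jinv y" "Jinv x"] by force

lemma psi_eq: "psi y = \<phi> (Jinv y)"
  by (simp add: psi_of_def)

lemma psi_pos: "\<forall>y>0. 0 < psi y"
  using phi_pos Jinv_pos by (simp add: psi_eq)

lemma psi_mono: "mono_on {0<..} psi"
proof (rule monotone_onI)
  fix x y :: real assume "x \<in> {0<..}" "y \<in> {0<..}" "x \<le> y"
  then have "0 \<le> Jinv x" "Jinv x \<le> Jinv y" using Jinv[of x] Jinv_mono[of x y] by auto
  then show "psi x \<le> psi y"
    using phi_less[of "Jinv x" "Jinv y"] by (cases "Jinv x = Jinv y") (auto simp: psi_eq)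
qed

lemma psi_subhomogeneous: "subhomogeneous (real n) psi"
  unfolding subhomogeneous_def
proof (intro allI impI)
  fix c y :: real assume c: "1 \<le> c" and y: "0 < y"
  define s where "s = Jinv y"
  define s' where "s' = Jinv (c * y)"
  have s: "0 < s" "J s = y" and s': "J s' = c * y" and "s \<le> s'"
    using Jinv_pos[OF y] Jinv[of y] Jinv[of "c * y"] Jinv_mono[of y "c * y"] c y
    by (auto simp: s_def s'_def)
  have "(\<phi> s' / \<phi> s) powr (1 / real n) * y \<le> c * y"
    using J_growth[OF \<open>0 < s\<close> \<open>s \<le> s'\<close>] s s' by simp
  then have "(\<phi> s' / \<phi> s) powr (1 / real n) \<le> c" using y by simp
  then have "((\<phi> s' / \<phi> s) powr (1 / real n)) powr real n \<le> c powr real n"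
    by (intro powr_mono2) auto
  then have "\<phi> s' / \<phi> s \<le> c powr real n"
    using n phi_pos[OF \<open>0 < s\<close>] phi_pos[of s'] \<open>s \<le> s'\<close> \<open>0 < s\<close> by (simp add: powr_powr)
  then have "\<phi> s' \<le> c powr real n * \<phi> s"
    using phi_pos[OF \<open>0 < s\<close>] by (simp add: pos_divide_le_eq mult.commute)
  then show "psi (c * y) \<le> c powr real n * psi y"
    by (simp add: psi_eq s_def s'_def)
qed

lemma mono_on_Xi_of_psi: "mono_on {0<..} (Xi_of g psi)"
  using n by (intro mono_on_Xi_of[OF _ g_pos g_mono g_sub psi_pos psi_mono]) (auto simp: psi_subhomogeneous)

end

lemma gauge_inversion_const:
  assumes n: "1 \<le> n" and gauge: "gauge_fun n \<phi>" and g: "\<forall>w>0. g w = c" and "0 < c"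
  shows "gauge_inversion n g \<phi>"
proof
  have "((\<lambda>w. w powr (1 / real n)) \<longlongrightarrow> 0) (at_right 0)"
    using n by (intro tendsto_zero_powrI tendsto_ident_at tendsto_const)
      (auto simp: eventually_at_right_field intro: exI[of _ 1])
  then have "filterlim (\<lambda>w. inverse (w powr (1 / real n))) at_top (at_right 0)"
    by (rule filterlim_inverse_at_top) (auto simp: eventually_at_right_field intro: exI[of _ 1])
  then have "filterlim (\<lambda>w. c * inverse (w powr (1 / real n))) at_top (at_right 0)"
    using \<open>0 < c\<close> by (intro filterlim_tendsto_pos_mult_at_top[OF tendsto_const])
  then show "filterlim (\<lambda>w. g w / w powr (1 / real n)) at_top (at_right 0)"
    by (rule filterlim_cong[THEN iffD1, rotated 3])
      (use g in \<open>auto simp: eventually_at_right_field divide_inverse intro!: exI[of _ 1]\<close>)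
  show "continuous_on {0<..} g"
    using continuous_on_const[of "{0<..}" c] by (rule continuous_on_cong[THEN iffD1, rotated 2]) (use g in auto)
qed (use assms in \<open>auto simp: subhomogeneous_def monotone_on_def ge_one_powr_ge_zero\<close>)

text \<open>For \<open>c \<le> 0\<close> the equation \<open>J_of n g \<phi> x = y > 0\<close> has no solution, so \<open>psi_of n g \<phi>\<close>
  takes the junk value of an empty \<open>THE\<close>.\<close>
lemma psi_of_const_nonpos:
  assumes gauge: "gauge_fun n \<phi>" and g: "\<forall>w>0. g w = c" and "c \<le> 0"
  shows "\<forall>y>0. psi_of n g \<phi> y = \<phi> (THE x. False)"
proof (intro allI impI)
  fix y :: real assume "0 < y"
  have "J_of n g \<phi> x \<noteq> y" if "0 \<le> x" for x
  proof (cases "x = 0")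
    case False
    have "0 < \<phi> x / x ^ n" using gauge False \<open>0 \<le> x\<close> by (simp add: gauge_fun_def)
    then have "J_of n g \<phi> x \<le> 0"
      using g \<open>c \<le> 0\<close> \<open>0 \<le> x\<close> by (simp add: J_of_def mult_nonneg_nonpos)
    then show ?thesis using \<open>0 < y\<close> by simp
  qed (use \<open>0 < y\<close> in \<open>simp add: J_of_def\<close>)
  then have "(\<lambda>x. x \<in> {0..} \<and> J_of n g \<phi> x = y) = (\<lambda>x. False)" by auto
  then show "psi_of n g \<phi> y = \<phi> (THE x. False)" by (simp add: psi_of_def the_inv_into_def)
qed

lemma mono_on_Xi_of_const:
  assumes n: "1 \<le> n" and gauge: "gauge_fun n \<phi>" and g: "\<forall>w>0. g w = c"
  shows "mono_on {0<..} (Xi_of g (psi_of n g \<phi>))"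
proof (cases "0 < c")
  case True
  then interpret gauge_inversion n g \<phi> using gauge_inversion_const[OF assms] by simp
  show ?thesis by (rule mono_on_Xi_of_psi)
next
  case False
  define p where "p = \<phi> (THE x. False)"
  have psi: "\<forall>y>0. psi_of n g \<phi> y = p"
    using psi_of_const_nonpos[OF gauge g] False by (simp add: p_def)
  then have "Xi_of g (psi_of n g \<phi>) r = ereal (r * (p / p))" if "0 < r" for r
    using that by (simp add: Xi_of_def Theta_const[OF g] Theta_right_const[OF psi])
  then show ?thesis
    by (intro monotone_onI) (auto intro: mult_right_mono simp: divide_nonneg_nonneg)
qed

locale superhomogeneous =
  fixes n :: nat and B :: "real \<Rightarrow> ereal"
  assumes n: "1 \<le> n" and B_zero: "B 0 = 0" and B_nonneg: "\<And>t. 0 \<le> t \<Longrightarrow> 0 \<le> B t"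
    and B_superhomogeneous: "\<And>c t. 1 \<le> c \<Longrightarrow> 0 \<le> t \<Longrightarrow> ereal (c ^ n) * B t \<le> B (c * t)"
begin

definition sublevel :: "real \<Rightarrow> real set" where
  "sublevel w = {t. 0 \<le> t \<and> B t \<le> ereal w}"

lemma young_inv_eq: "young_inv B w = Sup (sublevel w)"
  by (simp add: young_inv_def sublevel_def)

lemma zero_in_sublevel: "0 \<le> w \<Longrightarrow> 0 \<in> sublevel w"
  using B_zero by (simp add: sublevel_def zero_ereal_def)

lemma sublevel_mono: "w \<le> w' \<Longrightarrow> sublevel w \<subseteq> sublevel w'"
  unfolding sublevel_def by (auto intro: order_trans)

lemma B_mono: assumes "0 \<le> x" "x \<le> y" shows "B x \<le> B y"
proof (cases "x = 0")
  case False
  have "B x = ereal 1 * B x" by simp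
  also have "\<dots> \<le> ereal ((y / x) ^ n) * B x"
    using assms B_nonneg[of x] False by (intro ereal_mult_right_mono) (auto simp: one_le_power)
  also have "\<dots> \<le> B y"
    using B_superhomogeneous[of "y / x" x] assms False by simp
  finally show ?thesis .
qed (use B_zero B_nonneg assms in auto)

lemma B_less: assumes "0 < x" "x < y" "0 < B x" "B x < \<infinity>" shows "B x < B y"
proof -
  obtain b where b: "B x = ereal b" "0 < b" using assms(3,4) by (cases "B x") auto
  have "1 < (y / x) ^ n" using assms n by (simp add: one_less_power)
  then have "B x < ereal ((y / x) ^ n) * B x" using b by simp
  also have "\<dots> \<le> B y"
    using B_superhomogeneous[of "y / x" x] assms by simp
  finally show ?thesis .
qed

lemma not_little_o_everywhere:
  assumes "\<not> eventually (\<lambda>t. B t \<le> ereal (\<epsilon> * t ^ n)) (at_right 0)" and "0 < t"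
  shows "ereal (\<epsilon> * t ^ n) < B t"
proof -
  obtain t1 where t1: "0 < t1" "t1 < t" "ereal (\<epsilon> * t1 ^ n) < B t1"
    using assms unfolding eventually_at_right_field by (force simp: not_le)
  have "ereal (\<epsilon> * t ^ n) = ereal ((t / t1) ^ n) * ereal (\<epsilon> * t1 ^ n)"
    using t1 by (simp add: power_divide)
  also have "\<dots> < ereal ((t / t1) ^ n) * B t1"
    using t1 by (intro ereal_mult_strict_left_mono) auto
  also have "\<dots> \<le> B t"
    using B_superhomogeneous[of "t / t1" t1] t1 by simp
  finally show ?thesis .
qed

end

locale regular_superhomogeneous = superhomogeneous +
  assumes nondegenerate: "\<exists>t\<ge>0. 0 < B t"
    and B_little_o: "\<And>\<epsilon>. 0 < \<epsilon> \<Longrightarrow> eventually (\<lambda>t. B t \<le> ereal (\<epsilon> * t ^ n)) (at_right 0)"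
begin

lemma bdd_above_sublevel: "bdd_above (sublevel w)"
proof -
  obtain t0 where t0: "0 \<le> t0" "0 < B t0" using nondegenerate by auto
  then have "0 < t0" using B_zero by (cases "t0 = 0") auto
  show ?thesis
  proof (cases "\<exists>t\<in>sublevel w. t0 \<le> t")
    case False
    then show ?thesis by (intro bdd_aboveI[of _ t0]) auto
  next
    case True
    then have "B t0 \<le> ereal w" using B_mono t0 by (force simp: sublevel_def)
    then obtain b where b: "B t0 = ereal b" "0 < b" using t0 by (cases "B t0") auto
    \<comment> \<open>beyond \<open>t0\<close>, \<open>B\<close> grows at least linearly\<close>
    have "t \<le> max t0 (t0 * w / b)" if "t \<in> sublevel w" for t
    proof (cases "t \<le> t0")
      case True
      then show ?thesis by simp
    next
      case False
      have "ereal ((t / t0) ^ n * b) \<le> B t"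
        using B_superhomogeneous[of "t / t0" t0] False \<open>0 < t0\<close> b by simp
      also have "\<dots> \<le> ereal w" using that by (simp add: sublevel_def)
      finally have "(t / t0) ^ n * b \<le> w" by simp
      moreover have "t / t0 \<le> (t / t0) ^ n"
        using False \<open>0 < t0\<close> n power_increasing[of 1 n "t / t0"] by simp
      ultimately have "t / t0 * b \<le> w" using b by (meson mult_right_mono less_imp_le order_trans)
      then have "t \<le> t0 * w / b" using b \<open>0 < t0\<close> by (simp add: field_simps)
      then show ?thesis by simp
    qed
    then show ?thesis by (intro bdd_aboveI) auto
  qed
qed

lemma le_young_inv: "t \<in> sublevel w \<Longrightarrow> t \<le> young_inv B w"
  unfolding young_inv_eq by (rule cSup_upper) (auto simp: bdd_above_sublevel)

lemma young_inv_le: "0 \<le> w \<Longrightarrow> (\<And>t. t \<in> sublevel w \<Longrightarrow> t \<le> M) \<Longrightarrow> young_inv B w \<le> M"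
  unfolding young_inv_eq using zero_in_sublevel by (intro cSup_least) auto

lemma young_inv_lower_root:
  assumes "0 < K"
  shows "eventually (\<lambda>w. K * w powr (1 / real n) \<le> young_inv B w) (at_right 0)"
proof -
  define \<epsilon> where "\<epsilon> = 1 / K ^ n"
  have "0 < \<epsilon>" using assms by (simp add: \<epsilon>_def)
  then obtain \<delta> where \<delta>: "0 < \<delta>" "\<And>t. 0 < t \<Longrightarrow> t < \<delta> \<Longrightarrow> B t \<le> ereal (\<epsilon> * t ^ n)"
    using B_little_o unfolding eventually_at_right_field by fastforce
  show ?thesis unfolding eventually_at_right_field
  proof (intro exI[of _ "\<epsilon> * \<delta> ^ n"] conjI allI impI)
    show "0 < \<epsilon> * \<delta> ^ n" using \<open>0 < \<epsilon>\<close> \<delta> by simp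
    fix w assume w: "0 < w" "w < \<epsilon> * \<delta> ^ n"
    define t where "t = K * w powr (1 / real n)"
    have tn: "t ^ n = K ^ n * w"
      using w n assms by (simp add: t_def power_mult_distrib powr_realpow[symmetric] powr_powr)
    have "0 < t" using assms w by (simp add: t_def)
    have "t ^ n < \<delta> ^ n" using tn w assms by (simp add: \<epsilon>_def field_simps)
    then have "t < \<delta>" using \<open>0 < t\<close> \<delta> by (meson order_less_imp_le power_less_imp_less_base)
    then have "B t \<le> ereal (\<epsilon> * t ^ n)" using \<delta> \<open>0 < t\<close> by auto
    also have "\<epsilon> * t ^ n = w" using tn assms by (simp add: \<epsilon>_def)
    finally have "t \<in> sublevel w" using \<open>0 < t\<close> by (simp add: sublevel_def)
    then show "K * w powr (1 / real n) \<le> young_inv B w" using le_young_inv by (simp add: t_def)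
  qed
qed

lemma young_inv_mono: "mono_on {0<..} (young_inv B)"
  unfolding young_inv_eq
proof (rule monotone_onI)
  fix x y :: real assume "x \<in> {0<..}" "x \<le> y"
  then show "Sup (sublevel x) \<le> Sup (sublevel y)"
    using zero_in_sublevel[of x] by (intro cSup_subset_mono sublevel_mono bdd_above_sublevel) auto
qed

lemma young_inv_pos: "\<forall>w>0. 0 < young_inv B w"
proof (intro allI impI)
  fix w :: real assume "0 < w"
  obtain w0 where w0: "0 < w0" "\<And>v. 0 < v \<Longrightarrow> v < w0 \<Longrightarrow> 1 * v powr (1 / real n) \<le> young_inv B v"
    using young_inv_lower_root[of 1] unfolding eventually_at_right_field by auto
  have "0 < min w (w0 / 2) powr (1 / real n)" using \<open>0 < w\<close> \<open>0 < w0\<close> by simp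
  also have "\<dots> \<le> young_inv B (min w (w0 / 2))" using w0 \<open>0 < w\<close> by simp
  finally have "0 < young_inv B (min w (w0 / 2))" .
  moreover have "young_inv B (min w (w0 / 2)) \<le> young_inv B w"
    using \<open>0 < w\<close> \<open>0 < w0\<close> by (intro mono_onD[OF young_inv_mono]) auto
  ultimately show "0 < young_inv B w" by simp
qed

lemma young_inv_subhomogeneous: "subhomogeneous (1 / real n) (young_inv B)"
  unfolding subhomogeneous_def
proof (intro allI impI)
  fix l w :: real assume l: "1 \<le> l" and w: "0 < w"
  define c where "c = l powr (1 / real n)"
  have c: "1 \<le> c" "c ^ n = l"
    using l n by (simp_all add: c_def ge_one_powr_ge_zero powr_realpow[symmetric] powr_powr)
  show "young_inv B (l * w) \<le> c * young_inv B w"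
  proof (rule young_inv_le)
    fix t assume t: "t \<in> sublevel (l * w)"
    have "ereal l * B (t / c) \<le> B t"
      using B_superhomogeneous[of c "t / c"] c t by (simp add: sublevel_def)
    also have "\<dots> \<le> ereal l * ereal w" using t by (simp add: sublevel_def)
    finally have "B (t / c) \<le> ereal w"
      using l by (cases "B (t / c)") auto
    then have "t / c \<in> sublevel w" using t c by (simp add: sublevel_def)
    then have "t / c \<le> young_inv B w" by (rule le_young_inv)
    then show "t \<le> c * young_inv B w"
      using c by (simp add: divide_le_eq mult.commute)
  qed (use l w in simp)
qed

lemma B_less_below_young_inv:
  assumes "0 < w" "0 < t" "t < young_inv B w"
  shows "B t < ereal w"
proof -
  obtain t' where t': "t' \<in> sublevel w" "t < t'"
    using assms(3) zero_in_sublevel[of w] bdd_above_sublevel \<open>0 < w\<close>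
    unfolding young_inv_eq by (subst (asm) less_cSup_iff) auto
  then have "B t \<le> B t'" "B t' \<le> ereal w" using B_mono \<open>0 < t\<close> by (auto simp: sublevel_def)
  moreover have "B t \<noteq> ereal w"
  proof
    assume "B t = ereal w"
    then have "B t < B t'" using B_less[of t t'] assms t' by simp
    with \<open>B t = ereal w\<close> \<open>B t' \<le> ereal w\<close> show False by simp
  qed
  ultimately show ?thesis by simp
qed

lemma B_greater_above_young_inv: "0 \<le> t \<Longrightarrow> young_inv B w < t \<Longrightarrow> ereal w < B t"
  using le_young_inv[of t w] by (force simp: sublevel_def)

lemma young_inv_continuous: "continuous_on {0<..} (young_inv B)"
  unfolding continuous_on_iff
proof (intro ballI allI impI)
  fix w e :: real assume "w \<in> {0<..}" "0 < e"
  then have "0 < w" by simp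
  define x where "x = young_inv B w"
  define lo where "lo = x - min (e / 2) (x / 2)"
  define hi where "hi = x + min (e / 2) (x / 2)"
  have x: "0 < x" using young_inv_pos \<open>0 < w\<close> by (simp add: x_def)
  have lo: "0 < lo" "lo < x" and hi: "x < hi" using x \<open>0 < e\<close> by (auto simp: lo_def hi_def)
  \<comment> \<open>\<open>w\<close> lies strictly between \<open>B lo\<close> and \<open>B hi\<close>, so nearby \<open>w'\<close> do as well\<close>
  obtain blo where blo: "B lo = ereal blo" "blo < w"
    using B_less_below_young_inv[OF \<open>0 < w\<close> lo(1)] B_nonneg[of lo] lo unfolding x_def
    by (cases "B lo") auto
  obtain z where z: "w < z" "ereal z < B hi"
    using B_greater_above_young_inv[of hi w] hi x ereal_dense2 unfolding x_def by force
  define d where "d = min (w - blo) (z - w)"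
  show "\<exists>d>0. \<forall>w'\<in>{0<..}. dist w' w < d \<longrightarrow> dist (young_inv B w') (young_inv B w) < e"
  proof (intro exI[of _ d] conjI ballI impI)
    show "0 < d" using blo z by (simp add: d_def)
    fix w' :: real assume w': "w' \<in> {0<..}" "dist w' w < d"
    then have "blo < w'" "w' < z" by (auto simp: dist_real_def d_def)
    have "lo \<le> young_inv B w'"
      using lo blo \<open>blo < w'\<close> by (intro le_young_inv) (simp add: sublevel_def)
    moreover have "young_inv B w' \<le> hi"
    proof (rule young_inv_le)
      fix t assume t: "t \<in> sublevel w'"
      show "t \<le> hi"
      proof (rule ccontr)
        assume "\<not> t \<le> hi"
        then have "B hi \<le> B t" using B_mono hi x by simp
        also have "\<dots> \<le> ereal w'" using t by (simp add: sublevel_def)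
        finally have "B hi \<le> ereal w'" .
        moreover have "ereal w' < B hi"
          using z \<open>w' < z\<close> by (meson ereal_less_eq(3) le_less_trans less_imp_le)
        ultimately show False by simp
      qed
    qed (use w' in simp)
    ultimately show "dist (young_inv B w') (young_inv B w) < e"
      using \<open>0 < e\<close> x unfolding dist_real_def x_def[symmetric] lo_def hi_def by auto
  qed
qed

lemma young_inv_over_root: "filterlim (\<lambda>w. young_inv B w / w powr (1 / real n)) at_top (at_right 0)"
  unfolding filterlim_at_top_gt[where c = 0]
proof (intro allI impI)
  fix K :: real assume "0 < K"
  show "eventually (\<lambda>w. K \<le> young_inv B w / w powr (1 / real n)) (at_right 0)"
    using young_inv_lower_root[OF \<open>0 < K\<close>] eventually_at_right_less[of 0]
    by eventually_elim (simp add: pos_le_divide_eq)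
qed

end

context superhomogeneous
begin

lemma mono_on_Xi_of_young_inv:
  assumes gauge: "gauge_fun n \<phi>"
    and B_little_o: "\<And>\<epsilon>. 0 < \<epsilon> \<Longrightarrow> eventually (\<lambda>t. B t \<le> ereal (\<epsilon> * t ^ n)) (at_right 0)"
  shows "mono_on {0<..} (Xi_of (young_inv B) (psi_of n (young_inv B) \<phi>))"
proof (cases "\<exists>t\<ge>0. 0 < B t")
  case True
  interpret regular_superhomogeneous n B
    using True B_little_o by unfold_locales
  interpret gauge_inversion n "young_inv B" \<phi>
    using n young_inv_pos young_inv_mono young_inv_subhomogeneous young_inv_continuous
      young_inv_over_root gauge by unfold_locales
  show ?thesis by (rule mono_on_Xi_of_psi)
next
  case False
  \<comment> \<open>then every sublevel set is \<open>{0..}\<close>, and \<open>young_inv B\<close> is the junk value \<open>Sup {0..}\<close>\<close>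
  then have "sublevel w = {0..}" if "0 \<le> w" for w
    using that by (force simp: sublevel_def not_less intro: order_trans)
  then have "\<forall>w>0. young_inv B w = Sup {0::real..}"
    by (simp add: young_inv_eq)
  then show ?thesis using n gauge by (rule mono_on_Xi_of_const[rotated 2])
qed

end

lemma young_fun_superlinear:
  assumes "young_fun A" "1 \<le> c" "0 \<le> t"
  shows "c * A t \<le> A (c * t)"
proof -
  have "convex_on {0..} A" "A 0 = 0" using assms(1) by (auto simp: young_fun_def)
  then have "A ((1 - (1 - 1 / c)) *\<^sub>R (c * t) + (1 - 1 / c) *\<^sub>R 0)
      \<le> (1 - (1 - 1 / c)) * A (c * t) + (1 - 1 / c) * A 0"
    using assms by (intro convex_onD) (auto simp: field_simps)
  then show ?thesis using assms \<open>A 0 = 0\<close> by (simp add: field_simps)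
qed

lemma superhomogeneous_assoc_B_1:
  "young_fun A \<Longrightarrow> superhomogeneous 1 (assoc_B 1 A)"
  by unfold_locales (auto simp: assoc_B_def young_fun_def young_fun_superlinear)

lemma assoc_B_1_little_o:
  assumes "cond_C2 A" "cond_C3 1 A" "0 < \<epsilon>"
  shows "eventually (\<lambda>t. assoc_B 1 A t \<le> ereal (\<epsilon> * t ^ 1)) (at_right 0)"
proof -
  have "eventually (\<lambda>t. 1 / \<epsilon> \<le> t / A t) (at_right 0)"
    using assms(2) by (simp add: cond_C3_def filterlim_at_top)
  moreover have "eventually (\<lambda>t. 0 < A t) (at_right 0)"
    using assms(1) by (auto simp: cond_C2_def eventually_at_right_field intro: exI[of _ 1])
  ultimately show ?thesis
    by eventually_elim (use \<open>0 < \<epsilon>\<close> in \<open>simp add: assoc_B_def field_simps\<close>)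
qed

lemma young_conj_ge: "0 \<le> \<tau> \<Longrightarrow> ereal (\<tau> * t) - E \<tau> \<le> young_conj E t"
  unfolding young_conj_def by (rule SUP_upper) auto

lemma young_conj_nonneg: "E 0 = 0 \<Longrightarrow> 0 \<le> young_conj E t"
  using young_conj_ge[of 0 t E] by (simp add: zero_ereal_def)

lemma young_conj_zero:
  assumes "\<And>\<tau>. 0 \<le> E \<tau>" "E 0 = 0"
  shows "young_conj E 0 = 0"
proof -
  have "young_conj E 0 \<le> 0"
    unfolding young_conj_def
  proof (rule SUP_least)
    fix \<tau> :: real
    show "ereal (\<tau> * 0) - E \<tau> \<le> 0" using assms(1)[of \<tau>] by (cases "E \<tau>") auto
  qed
  then show ?thesis using young_conj_nonneg[of E 0, OF assms(2)] by simp
qed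

text \<open>Superhomogeneity of \<open>young_conj E\<close> is dual to the scaling law of \<open>E\<close> under
  \<open>\<tau> \<mapsto> c\<^sup>n\<^sup>-\<^sup>1 \<tau>\<close>, because \<open>c\<^sup>n\<^sup>-\<^sup>1 \<tau> \<cdot> c t = c\<^sup>n \<tau> t\<close>.\<close>
lemma young_conj_superhomogeneous:
  assumes E_nonneg: "\<And>\<tau>. 0 \<le> E \<tau>"
    and E_scale: "\<And>c \<sigma>. 1 \<le> c \<Longrightarrow> 0 \<le> \<sigma> \<Longrightarrow> E (c ^ (n - 1) * \<sigma>) \<le> ereal (c ^ n) * E \<sigma>"
    and "1 \<le> n" "1 \<le> c"
  shows "ereal (c ^ n) * young_conj E t \<le> young_conj E (c * t)"
proof -
  have cn: "0 < c ^ n" using \<open>1 \<le> c\<close> by simp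
  have "young_conj E t \<le> ereal (1 / c ^ n) * young_conj E (c * t)"
    unfolding young_conj_def[of E t]
  proof (rule SUP_least)
    fix \<sigma> :: real assume "\<sigma> \<in> {0..}"
    define \<tau> where "\<tau> = c ^ (n - 1) * \<sigma>"
    have "0 \<le> \<tau>" using \<open>\<sigma> \<in> {0..}\<close> \<open>1 \<le> c\<close> by (simp add: \<tau>_def)
    have ct: "\<tau> * (c * t) = c ^ n * (\<sigma> * t)"
      using \<open>1 \<le> n\<close> by (simp add: \<tau>_def power_eq_if)
    have E\<tau>: "E \<tau> \<le> ereal (c ^ n) * E \<sigma>"
      unfolding \<tau>_def using E_scale \<open>1 \<le> c\<close> \<open>\<sigma> \<in> {0..}\<close> by simp
    have "ereal (\<sigma> * t) - E \<sigma> \<le> ereal (1 / c ^ n) * (ereal (\<tau> * (c * t)) - E \<tau>)"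
    proof (cases "E \<sigma>")
      case (real e)
      obtain e' where e': "E \<tau> = ereal e'" "e' \<le> c ^ n * e"
        using E\<tau> E_nonneg[of \<tau>] real by (cases "E \<tau>") auto
      have "e' / c ^ n \<le> e" using e' cn by (simp add: divide_le_eq mult.commute)
      moreover have "(1 / c ^ n) * (c ^ n * (\<sigma> * t) - e') = \<sigma> * t - e' / c ^ n"
        using \<open>1 \<le> c\<close> by (simp add: right_diff_distrib)
      ultimately have "\<sigma> * t - e \<le> (1 / c ^ n) * (c ^ n * (\<sigma> * t) - e')" by linarith
      then show ?thesis unfolding ct using real e' by simp
    qed (use E_nonneg[of \<sigma>] in auto)
    also have "\<dots> \<le> ereal (1 / c ^ n) * young_conj E (c * t)"
      using \<open>0 \<le> \<tau>\<close> cn by (intro ereal_mult_left_mono young_conj_ge) auto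
    finally show "ereal (\<sigma> * t) - E \<sigma> \<le> ereal (1 / c ^ n) * young_conj E (c * t)" .
  qed
  then have "ereal (c ^ n) * young_conj E t \<le> ereal (c ^ n) * (ereal (1 / c ^ n) * young_conj E (c * t))"
    using cn by (intro ereal_mult_left_mono) auto
  also have "\<dots> = young_conj E (c * t)"
    using \<open>1 \<le> c\<close> by (simp flip: mult.assoc)
  finally show ?thesis .
qed

lemma borel_measurable_mono_real:
  fixes f :: "real \<Rightarrow> 'b::{linorder_topology, second_countable_topology}"
  assumes "mono f"
  shows "f \<in> borel_measurable borel"
proof (rule borel_measurableI_less)
  fix y
  have "is_interval {x. f x < y}"
    unfolding is_interval_1 using assms by (auto simp: mono_def intro: le_less_trans)
  then show "{x \<in> space borel. f x < y} \<in> sets borel"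
    using real_interval_borel_measurable by simp
qed

locale young_assoc =
  fixes n :: nat and A :: "real \<Rightarrow> real"
  assumes n: "2 \<le> n" and young: "young_fun A" and C2: "cond_C2 A" and C3: "cond_C3 n A"
begin

definition n' :: real where "n' = real n / (real n - 1)"
definition p :: real where "p = 1 / (real n - 1)"

definition A_conj :: "real \<Rightarrow> ereal" where "A_conj = young_conj (\<lambda>\<tau>. ereal (A \<tau>))"

definition tail_density :: "real \<Rightarrow> ennreal" where
  "tail_density s = e2ennreal (A_conj s) * ennreal (s powr (-1 - n'))"

definition tail :: "real \<Rightarrow> ennreal" where
  "tail \<tau> = (\<integral>\<^sup>+ s\<in>{\<tau><..}. tail_density s \<partial>lborel)"

definition E :: "real \<Rightarrow> ereal" where "E \<tau> = ereal (\<tau> powr n') * enn2ereal (tail \<tau>)"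

lemma E_eq_aux_E: "aux_E n A = E"
  by (rule ext) (simp add: aux_E_def E_def tail_def tail_density_def A_conj_def n'_def Let_def)

lemma assoc_B_eq: "assoc_B n A = young_conj E"
  using n by (simp add: assoc_B_def E_eq_aux_E)

lemma n'_gt_1: "1 < n'" using n by (simp add: n'_def field_simps)
lemma n'_eq: "n' = 1 + p" using n by (simp add: n'_def p_def field_simps)

lemma E_nonneg: "0 \<le> E \<tau>"
  unfolding E_def by (simp add: ereal_zero_le_0_iff)

lemma E_zero: "E 0 = 0"
  using n'_gt_1 by (simp add: E_def)

lemma tail_antimono: "\<sigma> \<le> \<tau> \<Longrightarrow> tail \<tau> \<le> tail \<sigma>"
  unfolding tail_def by (intro nn_integral_mono) (auto simp: indicator_def)

lemma E_scale:
  assumes c: "1 \<le> c" and "0 \<le> \<sigma>"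
  shows "E (c ^ (n - 1) * \<sigma>) \<le> ereal (c ^ n) * E \<sigma>"
proof -
  have "(c ^ (n - 1)) powr n' = c powr (real (n - 1) * n')"
    using c by (simp add: powr_realpow [symmetric] powr_powr)
  also have "real (n - 1) * n' = real n" using n by (simp add: n'_def of_nat_diff)
  finally have pw: "(c ^ (n - 1) * \<sigma>) powr n' = c ^ n * \<sigma> powr n'"
    using c by (simp add: powr_mult powr_realpow)
  have "\<sigma> \<le> c ^ (n - 1) * \<sigma>" using assms by (simp add: mult_le_cancel_right1 one_le_power)
  then have "enn2ereal (tail (c ^ (n - 1) * \<sigma>)) \<le> enn2ereal (tail \<sigma>)"
    using tail_antimono by (simp add: less_eq_ennreal.rep_eq[symmetric])
  then have "ereal (c ^ n * \<sigma> powr n') * enn2ereal (tail (c ^ (n - 1) * \<sigma>))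
      \<le> ereal (c ^ n * \<sigma> powr n') * enn2ereal (tail \<sigma>)"
    using c by (intro ereal_mult_left_mono) auto
  then show ?thesis unfolding E_def pw by (metis mult.assoc times_ereal.simps(1))
qed

lemma superhomogeneous_assoc_B: "superhomogeneous n (assoc_B n A)"
  unfolding assoc_B_eq
  using n E_nonneg E_zero young_conj_nonneg young_conj_zero young_conj_superhomogeneous[OF E_nonneg E_scale]
  by unfold_locales auto

lemma A_zero: "A 0 = 0" and A_convex: "convex_on {0..} A"
  using young by (auto simp: young_fun_def)
lemma A_pos: "t > 0 \<Longrightarrow> A t > 0" using C2 by (simp add: cond_C2_def)

lemma A_conj_ge: "\<sigma> \<ge> 0 \<Longrightarrow> ereal (\<sigma> * s - A \<sigma>) \<le> A_conj s"
  unfolding A_conj_def young_conj_def by (rule SUP_upper2[of \<sigma>]) auto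

lemma A_conj_nonneg: "A_conj s \<ge> 0" using A_conj_ge[of 0 s] A_zero by (simp add: zero_ereal_def)

lemma A_conj_mono: "mono A_conj"
  unfolding A_conj_def young_conj_def mono_def
proof (intro allI impI SUP_mono)
  fix x y :: real and \<sigma> assume "x \<le> y" "\<sigma> \<in> {0::real..}"
  then show "\<exists>m\<in>{0..}. ereal (\<sigma> * x) - ereal (A \<sigma>) \<le> ereal (m * y) - ereal (A m)"
    by (intro bexI[of _ \<sigma>]) (auto intro: mult_left_mono)
qed

lemma A_conj_measurable[measurable]: "A_conj \<in> borel_measurable borel"
  by (rule borel_measurable_mono_real[OF A_conj_mono])

lemma tail_density_measurable[measurable]: "tail_density \<in> borel_measurable borel"
  unfolding tail_density_def by measurable

lemma tail_eq: "tail \<tau> = (\<integral>\<^sup>+ s. tail_density s * indicator {\<tau><..} s \<partial>lborel)"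
  by (simp add: tail_def)

lemma exists_small_slope: assumes m: "m > 0" shows "\<exists>\<sigma>. 0 < \<sigma> \<and> \<sigma> < 1 \<and> A \<sigma> < m * \<sigma>"
proof (rule ccontr)
  assume "\<not> ?thesis"
  then have h: "\<And>\<sigma>. 0 < \<sigma> \<Longrightarrow> \<sigma> < 1 \<Longrightarrow> m * \<sigma> \<le> A \<sigma>" by (meson not_less)
  have "(\<integral>\<^sup>+ t\<in>{0<..<1}. ennreal ((t / A t) powr (1 / (real n - 1))) \<partial>lborel)
      \<le> (\<integral>\<^sup>+ t. ennreal ((1 / m) powr (1 / (real n - 1))) * indicator {0<..<1::real} t \<partial>lborel)"
  proof (intro nn_integral_mono)
    fix t :: real
    show "ennreal ((t / A t) powr (1 / (real n - 1))) * indicator {0<..<1} t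
        \<le> ennreal ((1 / m) powr (1 / (real n - 1))) * indicator {0<..<1} t"
    proof (cases "t \<in> {0<..<1}")
      case True
      then have t: "0 < t" "t < 1" by auto
      have A_conj: "A t > 0" using A_pos t by simp
      have "t / A t \<le> 1 / m" using h[OF t] A_conj m t by (simp add: field_simps)
      then have "(t / A t) powr (1 / (real n - 1)) \<le> (1 / m) powr (1 / (real n - 1))"
        using t A_conj n by (intro powr_mono2) auto
      then show ?thesis using True by (simp add: ennreal_leI)
    qed simp
  qed
  also have "\<dots> = ennreal ((1 / m) powr (1 / (real n - 1))) * emeasure lborel {0::real<..<1}"
    by (rule nn_integral_cmult_indicator) simp
  also have "\<dots> < \<infinity>" by (simp add: ennreal_mult_less_top)
  finally show False using C3 n by (simp add: cond_C3_def)
qed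

lemma A_conj_linear_lower:
  assumes t1: "\<tau>1 > 0"
  shows "\<exists>\<sigma>1>0. \<forall>\<tau>\<ge>\<tau>1. ereal (\<sigma>1 * \<tau> / 2) \<le> A_conj \<tau>"
proof -
  obtain \<sigma>1 where s: "0 < \<sigma>1" "\<sigma>1 < 1" "A \<sigma>1 < \<tau>1 / 2 * \<sigma>1" using exists_small_slope[of "\<tau>1/2"] t1 by auto
  show ?thesis
  proof (intro exI[of _ \<sigma>1] conjI allI impI)
    show "\<sigma>1 > 0" by fact
    fix \<tau> assume "\<tau> \<ge> \<tau>1"
    then have "\<sigma>1 * \<tau>1 \<le> \<sigma>1 * \<tau>" using s by (intro mult_left_mono) auto
    moreover have "\<tau>1 / 2 * \<sigma>1 = (\<sigma>1 * \<tau>1) / 2" by simp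
    ultimately have "\<sigma>1 * \<tau> / 2 \<le> \<sigma>1 * \<tau> - A \<sigma>1" using s(3) by linarith
    also have "ereal \<dots> \<le> A_conj \<tau>" using A_conj_ge s by simp
    finally show "ereal (\<sigma>1 * \<tau> / 2) \<le> A_conj \<tau>" by simp
  qed
qed

lemma tail_lower:
  assumes t: "\<tau> > 0"
  shows "e2ennreal (A_conj \<tau>) * ennreal ((2 * \<tau>) powr (-1 - n') * \<tau>) \<le> tail \<tau>"
proof -
  have "e2ennreal (A_conj \<tau>) * ennreal ((2 * \<tau>) powr (-1 - n') * \<tau>)
      = (\<integral>\<^sup>+ s. (e2ennreal (A_conj \<tau>) * ennreal ((2 * \<tau>) powr (-1 - n'))) * indicator {\<tau><..<2*\<tau>} s \<partial>lborel)"
    using t by (subst nn_integral_cmult_indicator) (auto simp: ennreal_mult' mult.assoc)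
  also have "\<dots> \<le> tail \<tau>"
    unfolding tail_def tail_density_def
  proof (intro nn_integral_mono)
    fix s :: real
    show "e2ennreal (A_conj \<tau>) * ennreal ((2 * \<tau>) powr (-1 - n')) * indicator {\<tau><..<2 * \<tau>} s
        \<le> e2ennreal (A_conj s) * ennreal (s powr (-1 - n')) * indicator {\<tau><..} s"
    proof (cases "s \<in> {\<tau><..<2*\<tau>}")
      case True
      then have s: "\<tau> < s" "s < 2 * \<tau>" by auto
      have "e2ennreal (A_conj \<tau>) \<le> e2ennreal (A_conj s)" using A_conj_mono s by (intro e2ennreal_mono) (auto simp: mono_def)
      moreover have "(2 * \<tau>) powr (-1 - n') \<le> s powr (-1 - n')"
        using s t n'_gt_1 by (intro powr_mono2') auto
      ultimately show ?thesis using True s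
        by (auto intro!: mult_mono ennreal_leI simp: indicator_def)
    qed simp
  qed
  finally show ?thesis .
qed

lemma E_lower:
  assumes t: "\<tau> > 0"
  shows "ereal (2 powr (-1 - n')) * A_conj \<tau> \<le> E \<tau>"
proof -
  have eq: "\<tau> powr n' * ((2 * \<tau>) powr (-1 - n') * \<tau>) = 2 powr (-1 - n')"
  proof -
    have "(2 * \<tau>) powr (-1 - n') = 2 powr (-1 - n') * \<tau> powr (-1 - n')" by (rule powr_mult)
    moreover have "\<tau> powr n' * \<tau> powr (-1 - n') * \<tau> = 1"
    proof -
      have "\<tau> powr n' * \<tau> powr (-1 - n') = \<tau> powr (-1)" using t by (simp add: powr_add[symmetric])
      then show ?thesis using t by (simp add: powr_minus field_simps)
    qed
    ultimately show ?thesis by (simp add: field_simps)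
  qed
  have c0: "(2 * \<tau>) powr (-1 - n') * \<tau> \<ge> 0" using t by simp
  have "enn2ereal (e2ennreal (A_conj \<tau>) * ennreal ((2 * \<tau>) powr (-1 - n') * \<tau>)) \<le> enn2ereal (tail \<tau>)"
    using tail_lower[OF t] by (simp add: less_eq_ennreal.rep_eq[symmetric])
  then have "A_conj \<tau> * ereal ((2 * \<tau>) powr (-1 - n') * \<tau>) \<le> enn2ereal (tail \<tau>)"
    using c0 A_conj_nonneg by (simp add: times_ennreal.rep_eq enn2ereal_e2ennreal)
  then have "ereal (\<tau> powr n') * (A_conj \<tau> * ereal ((2 * \<tau>) powr (-1 - n') * \<tau>)) \<le> E \<tau>"
    unfolding E_def by (intro ereal_mult_left_mono) auto
  moreover have "ereal (\<tau> powr n') * (A_conj \<tau> * ereal ((2 * \<tau>) powr (-1 - n') * \<tau>))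
      = ereal (\<tau> powr n' * ((2 * \<tau>) powr (-1 - n') * \<tau>)) * A_conj \<tau>"
    by (simp add: ac_simps)
  ultimately show ?thesis unfolding eq by (simp add: mult.commute)
qed

lemma E_linear_lower:
  assumes t1: "\<tau>1 > 0"
  shows "\<exists>\<eta>>0. \<forall>\<tau>\<ge>\<tau>1. ereal (\<eta> * \<tau>) \<le> E \<tau>"
proof -
  obtain \<sigma>1 where s: "\<sigma>1 > 0" "\<And>\<tau>. \<tau> \<ge> \<tau>1 \<Longrightarrow> ereal (\<sigma>1 * \<tau> / 2) \<le> A_conj \<tau>"
    using A_conj_linear_lower[OF t1] by auto
  show ?thesis
  proof (intro exI[of _ "2 powr (-1 - n') * \<sigma>1 / 2"] conjI allI impI)
    show "0 < 2 powr (-1 - n') * \<sigma>1 / 2" using s by simp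
    fix \<tau> assume ta: "\<tau> \<ge> \<tau>1"
    have "ereal (2 powr (-1 - n') * \<sigma>1 / 2 * \<tau>) = ereal (2 powr (-1 - n')) * ereal (\<sigma>1 * \<tau> / 2)" by simp
    also have "\<dots> \<le> ereal (2 powr (-1 - n')) * A_conj \<tau>" using s ta by (intro ereal_mult_left_mono) auto
    also have "\<dots> \<le> E \<tau>" using E_lower ta t1 by simp
    finally show "ereal (2 powr (-1 - n') * \<sigma>1 / 2 * \<tau>) \<le> E \<tau>" .
  qed
qed

lemma A_continuous: "continuous_on {0<..} A"
  by (rule convex_on_continuous) (auto intro: convex_on_subset[OF A_convex] simp: convex_real_interval)

definition A_slope :: "real \<Rightarrow> real" where "A_slope \<sigma> = indicator {0<..<1} \<sigma> *\<^sub>R (A \<sigma> / \<sigma>)"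

lemma A_slope_measurable[measurable]: "A_slope \<in> borel_measurable borel"
  unfolding A_slope_def
proof (rule borel_measurable_continuous_on_indicator)
  show "{0<..<1::real} \<in> sets borel" by simp
  have "continuous_on {0<..<1} A" using A_continuous by (rule continuous_on_subset) auto
  then show "continuous_on {0<..<1} (\<lambda>\<sigma>. A \<sigma> / \<sigma>)"
    by (intro continuous_on_divide continuous_on_id) auto
qed

lemma A_slope_eq: "\<sigma> \<in> {0<..<1} \<Longrightarrow> A_slope \<sigma> = A \<sigma> / \<sigma>" by (simp add: A_slope_def)
lemma A_slope_pos: "\<sigma> \<in> {0<..<1} \<Longrightarrow> A_slope \<sigma> > 0" using A_pos by (simp add: A_slope_def)

text \<open>With \<open>a = A \<sigma> / \<sigma>\<close>, the integrand of (C3) is \<open>a\<^sup>-\<^sup>p = 2\<^sup>n\<^sup>' (2a)\<^sup>-\<^sup>n\<^sup>' a \<le> \<integral>\<^sub>a\<^sup>2\<^sup>a 2\<^sup>n\<^sup>' v\<^sup>-\<^sup>n\<^sup>' dv\<close>.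
  Integrating first in \<open>\<sigma>\<close>, the set of \<open>\<sigma>\<close> with \<open>a < v\<close> has measure at most \<open>A_conj (2v) / v\<close>,
  which bounds (C3) by integrals of \<open>tail_density\<close>.\<close>
definition slope_kernel :: "real \<Rightarrow> real \<Rightarrow> ennreal" where
  "slope_kernel \<sigma> v = (if \<sigma> \<in> {0<..<1} \<and> A_slope \<sigma> < v \<and> v < 2 * A_slope \<sigma> then ennreal (2 powr n' * v powr (-n')) else 0)"

lemma slope_kernel_measurable: "case_prod slope_kernel \<in> borel_measurable (lborel \<Otimes>\<^sub>M lborel)"
  unfolding slope_kernel_def by measurable

lemma C3_integrand_le_kernel:
  "ennreal ((\<sigma> / A \<sigma>) powr (1 / (real n - 1))) * indicator {0<..<1} \<sigma> \<le> (\<integral>\<^sup>+ v. slope_kernel \<sigma> v \<partial>lborel)"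
proof (cases "\<sigma> \<in> {0<..<1}")
  case False then show ?thesis by simp
next
  case True
  define a where "a = A \<sigma> / \<sigma>"
  have a: "a > 0" "A_slope \<sigma> = a" using A_slope_pos[OF True] A_slope_eq[OF True] by (auto simp: a_def)
  have "\<sigma> / A \<sigma> = 1 / a" by (simp add: a_def)
  then have "(\<sigma> / A \<sigma>) powr (1 / (real n - 1)) = (1 / a) powr p" by (simp add: p_def)
  also have "\<dots> = 1 / a powr p" using a by (simp add: powr_divide)
  also have "\<dots> = a powr (-p)" by (rule powr_minus_divide[symmetric])
  finally have "(\<sigma> / A \<sigma>) powr (1 / (real n - 1)) = a powr (-p)" .
  also have "\<dots> = 2 powr n' * (2 * a) powr (-n') * a"
  proof -
    have "(2 * a) powr (-n') = 2 powr (-n') * a powr (-n')" by (rule powr_mult)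
    moreover have "2 powr n' * 2 powr (-n') = (1::real)" by (simp add: powr_add[symmetric])
    moreover have "a powr (-n') * a = a powr (-p)"
    proof -
      have "a powr (-n') * a = a powr (-n') * a powr 1" using a by simp
      also have "\<dots> = a powr (-n' + 1)" by (rule powr_add[symmetric])
      also have "-n' + 1 = -p" by (simp add: n'_eq)
      finally show ?thesis .
    qed
    ultimately show ?thesis by (simp add: algebra_simps)
  qed
  finally have eq: "(\<sigma> / A \<sigma>) powr (1 / (real n - 1)) = 2 powr n' * (2 * a) powr (-n') * a" .
  have "ennreal ((\<sigma> / A \<sigma>) powr (1 / (real n - 1))) * indicator {0<..<1} \<sigma>
      = (\<integral>\<^sup>+ v. ennreal (2 powr n' * (2 * a) powr (-n')) * indicator {a<..<2*a} v \<partial>lborel)"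
    using True a by (subst nn_integral_cmult_indicator) (auto simp: eq ennreal_mult')
  also have "\<dots> \<le> (\<integral>\<^sup>+ v. slope_kernel \<sigma> v \<partial>lborel)"
  proof (intro nn_integral_mono)
    fix v :: real
    show "ennreal (2 powr n' * (2 * a) powr (-n')) * indicator {a<..<2*a} v \<le> slope_kernel \<sigma> v"
    proof (cases "v \<in> {a<..<2*a}")
      case True
      have "(2 * a) powr (-n') \<le> v powr (-n')" using True a n'_gt_1 by (intro powr_mono2') auto
      then show ?thesis using True \<open>\<sigma> \<in> {0<..<1}\<close> a
        by (auto simp: slope_kernel_def intro!: ennreal_leI mult_left_mono)
    qed simp
  qed
  finally show ?thesis .
qed

definition near_density :: "real \<Rightarrow> ennreal" where
  "near_density v = indicator {0<..<1} v * ennreal (v powr (-1 - n')) * e2ennreal (A_conj (2 * v))"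

lemma near_density_measurable[measurable]: "near_density \<in> borel_measurable borel"
  unfolding near_density_def by measurable

definition kernel_bound :: "real \<Rightarrow> ennreal" where
  "kernel_bound v = ennreal (2 powr n') * (near_density v
      + ennreal (v powr (-n')) * indicator {1..} v)"

definition slope_band :: "real \<Rightarrow> real set" where
  "slope_band v = {\<sigma>. \<sigma> \<in> {0<..<1} \<and> A_slope \<sigma> < v \<and> v < 2 * A_slope \<sigma>}"

lemma slope_band_measurable: "slope_band v \<in> sets lborel"
  unfolding slope_band_def by measurable

text \<open>On \<open>slope_band v\<close> we have \<open>A \<sigma> < v \<sigma>\<close>, so \<open>\<sigma> v = 2 v \<sigma> - v \<sigma> < 2 v \<sigma> - A \<sigma> \<le> A_conj (2 v)\<close>.\<close>
lemma emeasure_slope_band: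
  assumes "0 < v"
  shows "emeasure lborel (slope_band v) \<le> ennreal (1 / v) * e2ennreal (A_conj (2 * v))"
proof (cases "A_conj (2 * v)")
  case (real r)
  have "0 \<le> r" using A_conj_nonneg[of "2 * v"] real by simp
  have "slope_band v \<subseteq> {0<..<r / v}"
  proof
    fix \<sigma> assume "\<sigma> \<in> slope_band v"
    then have \<sigma>: "\<sigma> \<in> {0<..<1}" "A \<sigma> < v * \<sigma>"
      using A_slope_eq by (auto simp: slope_band_def divide_less_eq)
    moreover have "ereal (\<sigma> * (2 * v) - A \<sigma>) \<le> A_conj (2 * v)" using A_conj_ge \<sigma> by simp
    ultimately have "\<sigma> * (2 * v) - A \<sigma> \<le> r" using real by simp
    moreover have "\<sigma> * (2 * v) = 2 * (v * \<sigma>)" by simp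
    ultimately have "v * \<sigma> < r" using \<sigma>(2) by linarith
    then show "\<sigma> \<in> {0<..<r / v}" using \<sigma> \<open>0 < v\<close> by (simp add: field_simps)
  qed
  then have "emeasure lborel (slope_band v) \<le> emeasure lborel {0<..<r / v}" by (intro emeasure_mono) auto
  also have "\<dots> = ennreal (1 / v) * e2ennreal (A_conj (2 * v))"
    using real \<open>0 \<le> r\<close> \<open>0 < v\<close> by (simp add: ennreal_mult'[symmetric])
  finally show ?thesis .
qed (use assms A_conj_nonneg[of "2 * v"] in \<open>auto simp: ennreal_mult_top\<close>)

lemma slope_kernel_integral_le: "(\<integral>\<^sup>+ \<sigma>. slope_kernel \<sigma> v \<partial>lborel) \<le> kernel_bound v"
proof -
  have "(\<integral>\<^sup>+ \<sigma>. slope_kernel \<sigma> v \<partial>lborel) = (\<integral>\<^sup>+ \<sigma>. ennreal (2 powr n' * v powr (-n')) * indicator (slope_band v) \<sigma> \<partial>lborel)"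
    by (intro nn_integral_cong) (auto simp: slope_kernel_def slope_band_def indicator_def)
  also have "\<dots> = ennreal (2 powr n' * v powr (-n')) * emeasure lborel (slope_band v)"
    by (rule nn_integral_cmult_indicator) (rule slope_band_measurable)
  also have "\<dots> \<le> kernel_bound v"
  proof (cases "0 < v \<and> v < 1")
    case True
    have "v powr (-n') * (1 / v) = v powr (-1 - n')"
      using True by (simp add: powr_diff powr_minus field_simps)
    then have "2 powr n' * v powr (-n') * (1 / v) = 2 powr n' * v powr (-1 - n')"
      by (simp only: mult.assoc)
    then have "ennreal (2 powr n' * v powr (-n')) * ennreal (1 / v) = ennreal (2 powr n') * ennreal (v powr (-1 - n'))"
      using True by (simp flip: ennreal_mult del: times_divide_eq_right)
    then have "ennreal (2 powr n' * v powr (-n')) * (ennreal (1 / v) * e2ennreal (A_conj (2 * v))) = kernel_bound v"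
      using True by (simp add: kernel_bound_def near_density_def flip: mult.assoc)
    then show ?thesis
      using emeasure_slope_band[of v] True by (metis mult_left_mono zero_le)
  next
    case False
    consider "v \<le> 0" | "1 \<le> v" using False by linarith
    then show ?thesis
    proof cases
      case 1
      then have "slope_band v = {}" using A_slope_pos by (force simp: slope_band_def)
      then show ?thesis by simp
    next
      case 2
      have "emeasure lborel (slope_band v) \<le> emeasure lborel {0<..<1::real}"
        by (intro emeasure_mono) (auto simp: slope_band_def)
      then have "ennreal (2 powr n' * v powr (-n')) * emeasure lborel (slope_band v) \<le> ennreal (2 powr n' * v powr (-n')) * 1"
        by (intro mult_left_mono) auto
      also have "\<dots> = kernel_bound v" using 2 by (simp add: kernel_bound_def near_density_def ennreal_mult')
      finally show ?thesis .
    qed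
  qed
  finally show ?thesis .
qed

lemma far_integral_finite: "(\<integral>\<^sup>+ v. ennreal (v powr (-n')) * indicator {1..} v \<partial>lborel) < \<infinity>"
proof -
  have "(\<integral>\<^sup>+ v. ennreal (v powr (-n')) * indicator {1..} v \<partial>lborel) = ennreal (0 - (- (1 powr (1 - n')) / (n' - 1)))"
  proof (rule nn_integral_FTC_atLeast[where F="\<lambda>v. - (v powr (1 - n')) / (n' - 1)" and T=0])
    show "(\<lambda>v. v powr (-n')) \<in> borel_measurable borel" by measurable
    fix x :: real assume x: "1 \<le> x"
    have "((\<lambda>v. v powr (1 - n')) has_real_derivative (1 - n') * x powr (1 - n' - 1)) (at x)"
      using x by (intro has_real_derivative_powr) auto
    then have "((\<lambda>v. - (v powr (1 - n')) / (n' - 1)) has_real_derivative - ((1 - n') * x powr (1 - n' - 1)) / (n' - 1)) (at x)"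
      by (intro DERIV_cdivide DERIV_minus)
    moreover have "- ((1 - n') * x powr (1 - n' - 1)) / (n' - 1) = x powr (-n')" using n'_gt_1 by (simp add: field_simps)
    ultimately show "((\<lambda>v. - (v powr (1 - n')) / (n' - 1)) has_real_derivative x powr (-n')) (at x)" by simp
    show "0 \<le> x powr (-n')" by simp
  next
    have "((\<lambda>v. v powr (1 - n')) \<longlongrightarrow> 0) at_top"
      using n'_gt_1 by (intro tendsto_neg_powr filterlim_ident) auto
    then have "((\<lambda>v. - (v powr (1 - n'))) \<longlongrightarrow> 0) at_top" using tendsto_minus by fastforce
    then show "((\<lambda>v. - (v powr (1 - n')) / (n' - 1)) \<longlongrightarrow> 0) at_top"
      by (rule tendsto_divide_zero)
  qed
  then show ?thesis by simp
qed

lemma near_integral_finite: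
  assumes fin: "(\<integral>\<^sup>+ s. tail_density s * indicator {0<..} s \<partial>lborel) < \<infinity>"
  shows "(\<integral>\<^sup>+ v. near_density v \<partial>lborel) < \<infinity>"
proof -
  define g where "g s = tail_density s * indicator {0<..<2} s" for s
  have gm: "g \<in> borel_measurable borel" unfolding g_def by measurable
  have "(\<integral>\<^sup>+ s. g s \<partial>lborel) \<le> (\<integral>\<^sup>+ s. tail_density s * indicator {0<..} s \<partial>lborel)"
    unfolding g_def by (intro nn_integral_mono) (auto simp: indicator_def)
  then have gfin: "(\<integral>\<^sup>+ s. g s \<partial>lborel) < \<infinity>" using fin by simp
  have "(\<integral>\<^sup>+ s. g s \<partial>lborel) = ennreal 2 * (\<integral>\<^sup>+ x. g (0 + 2 * x) \<partial>lborel)"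
    using nn_integral_real_affine[OF gm, of 2 0] by simp
  also have "(\<integral>\<^sup>+ x. g (0 + 2 * x) \<partial>lborel)
      = (\<integral>\<^sup>+ x. ennreal (2 powr (-1 - n')) * (near_density x) \<partial>lborel)"
  proof (intro nn_integral_cong)
    fix x :: real
    show "g (0 + 2 * x) = ennreal (2 powr (-1 - n')) * (near_density x)"
    proof (cases "x \<in> {0<..<1}")
      case True
      have "(2 * x) powr (-1 - n') = 2 powr (-1 - n') * x powr (-1 - n')" by (rule powr_mult)
      then show ?thesis using True
        by (simp add: g_def tail_density_def near_density_def indicator_def ennreal_mult' mult_ac)
    next
      case False
      then have "2 * x \<notin> {0<..<2}" by auto
      then show ?thesis using False by (simp add: g_def near_density_def)
    qed
  qed
  also have "\<dots> = ennreal (2 powr (-1 - n')) * (\<integral>\<^sup>+ x. near_density x \<partial>lborel)"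
    by (rule nn_integral_cmult) measurable
  finally have "ennreal 2 * (ennreal (2 powr (-1 - n')) * (\<integral>\<^sup>+ x. near_density x \<partial>lborel)) < \<infinity>"
    using gfin by simp
  then have "(\<integral>\<^sup>+ x. near_density x \<partial>lborel) = 0
     \<or> (\<integral>\<^sup>+ x. near_density x \<partial>lborel) < top"
    by (simp add: ennreal_mult_less_top)
  then show ?thesis by (metis ennreal_zero_less_top infinity_ennreal_def)
qed

lemma tail_density_divergent: "(\<integral>\<^sup>+ s. tail_density s * indicator {0<..} s \<partial>lborel) = \<infinity>"
proof (rule ccontr)
  assume "(\<integral>\<^sup>+ s. tail_density s * indicator {0<..} s \<partial>lborel) \<noteq> \<infinity>"
  then have fin: "(\<integral>\<^sup>+ s. tail_density s * indicator {0<..} s \<partial>lborel) < \<infinity>"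
    by (simp add: top.not_eq_extremum)
  have "\<infinity> = (\<integral>\<^sup>+ \<sigma>. ennreal ((\<sigma> / A \<sigma>) powr (1 / (real n - 1))) * indicator {0<..<1} \<sigma> \<partial>lborel)"
    using C3 n by (simp add: cond_C3_def)
  also have "\<dots> \<le> (\<integral>\<^sup>+ \<sigma>. (\<integral>\<^sup>+ v. slope_kernel \<sigma> v \<partial>lborel) \<partial>lborel)"
    by (intro nn_integral_mono C3_integrand_le_kernel)
  also have "\<dots> = (\<integral>\<^sup>+ v. (\<integral>\<^sup>+ \<sigma>. slope_kernel \<sigma> v \<partial>lborel) \<partial>lborel)"
    by (rule lborel_pair.Fubini'[symmetric]) (rule slope_kernel_measurable)
  also have "\<dots> \<le> (\<integral>\<^sup>+ v. kernel_bound v \<partial>lborel)"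
    by (intro nn_integral_mono slope_kernel_integral_le)
  also have "\<dots> = ennreal (2 powr n') * ((\<integral>\<^sup>+ v. near_density v \<partial>lborel)
      + (\<integral>\<^sup>+ v. ennreal (v powr (-n')) * indicator {1..} v \<partial>lborel))"
    unfolding kernel_bound_def by (simp add: nn_integral_cmult nn_integral_add)
  also have "\<dots> < \<infinity>"
    using near_integral_finite[OF fin] far_integral_finite by (simp add: ennreal_mult_less_top)
  finally show False by simp
qed

lemma tail_unbounded: "\<exists>\<tau>>0. ennreal C < tail \<tau>"
proof (rule ccontr)
  assume "\<not> ?thesis"
  then have bound: "tail (1 / Suc k) \<le> ennreal C" for k
    using not_less of_nat_0_less_iff zero_less_Suc by (metis divide_pos_pos zero_less_one)
  define f where "f k s = tail_density s * indicator {1 / Suc k<..} s" for k :: nat and s :: real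
  have "incseq f"
    unfolding incseq_def f_def le_fun_def
    by (auto intro!: mult_left_mono simp: indicator_def frac_le le_less_trans[rotated])
  have "(SUP k. f k s) = tail_density s * indicator {0<..} s" for s
  proof (cases "0 < s")
    case True
    obtain k0 :: nat where "1 / real (Suc k0) < s"
      using True by (metis reals_Archimedean inverse_eq_divide of_nat_Suc)
    with True show ?thesis
      by (intro antisym SUP_least SUP_upper2[of k0]) (auto simp: f_def indicator_def)
  next
    case False
    then have "f k s = 0" for k
      by (auto simp: f_def indicator_def not_less intro: order_trans[of s 0])
    then show ?thesis using False by simp
  qed
  then have "(\<integral>\<^sup>+ s. tail_density s * indicator {0<..} s \<partial>lborel) = (\<integral>\<^sup>+ s. (SUP k. f k s) \<partial>lborel)"
    by (simp only:)
  also have "\<dots> = (SUP k. integral\<^sup>N lborel (f k))"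
    using \<open>incseq f\<close> by (rule nn_integral_monotone_convergence_SUP) (unfold f_def, measurable)
  also have "\<dots> \<le> ennreal C"
  proof (rule SUP_least)
    fix k :: nat
    have "integral\<^sup>N lborel (f k) = tail (1 / Suc k)" unfolding tail_eq f_def[abs_def] ..
    then show "integral\<^sup>N lborel (f k) \<le> ennreal C" using bound by simp
  qed
  finally show False using tail_density_divergent by (simp add: top_unique)
qed

lemma Young_inequality_eps:
  assumes e: "\<epsilon> > 0" and tau: "\<tau> \<ge> 0" and t: "t \<ge> 0"
  shows "\<tau> * t \<le> \<epsilon> * t ^ n + (1 / ((\<epsilon> * real n) powr (n' / real n) * n')) * \<tau> powr n'"
proof -
  define K where "K = (\<epsilon> * real n) powr (1 / real n)"
  have K: "K > 0" using e n by (simp add: K_def)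
  have pq: "1 / real n + 1 / n' = 1" using n by (simp add: n'_def field_simps)
  have "(K * t) * (\<tau> / K) \<le> (K * t) powr real n / real n + (\<tau> / K) powr n' / n'"
    using n n'_gt_1 K t tau pq by (intro Youngs_inequality) auto
  moreover have "(K * t) * (\<tau> / K) = \<tau> * t" using K by simp
  moreover have "(K * t) powr real n / real n = \<epsilon> * t ^ n"
  proof -
    have "(K * t) powr real n = K powr real n * t powr real n" by (rule powr_mult)
    also have "K powr real n = \<epsilon> * real n" using e n by (simp add: K_def powr_powr)
    also have "t powr real n = t ^ n"
      using t n by (cases "t = 0") (auto simp: powr_realpow)
    finally show ?thesis using n by simp
  qed
  moreover have "(\<tau> / K) powr n' / n' = (1 / ((\<epsilon> * real n) powr (n' / real n) * n')) * \<tau> powr n'"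
  proof -
    have "(\<tau> / K) powr n' = \<tau> powr n' / K powr n'" using tau K by (simp add: powr_divide)
    also have "K powr n' = (\<epsilon> * real n) powr (n' / real n)" using e n by (simp add: K_def powr_powr)
    finally show ?thesis by simp
  qed
  ultimately show ?thesis by simp
qed

lemma small_tail_point:
  assumes "0 < \<epsilon>" "0 < t" "ereal (\<epsilon> * t ^ n) < young_conj E t"
  shows "\<exists>\<tau>>0. E \<tau> < ereal (\<tau> * t) \<and> tail \<tau> < ennreal (1 / ((\<epsilon> * real n) powr (n' / real n) * n'))"
proof -
  define C where "C = 1 / ((\<epsilon> * real n) powr (n' / real n) * n')"
  have "0 < C" using \<open>0 < \<epsilon>\<close> n n'_gt_1 by (simp add: C_def)
  obtain \<tau> where \<tau>: "0 \<le> \<tau>" "ereal (\<epsilon> * t ^ n) < ereal (\<tau> * t) - E \<tau>"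
    using assms(3) unfolding young_conj_def less_SUP_iff by auto
  obtain e where e: "E \<tau> = ereal e" "0 \<le> e" using \<tau>(2) E_nonneg[of \<tau>] by (cases "E \<tau>") auto
  have lt: "\<epsilon> * t ^ n < \<tau> * t - e" using \<tau> e by simp
  have "0 < \<epsilon> * t ^ n" using assms by simp
  then have "0 < \<tau>" using lt e \<open>0 \<le> \<tau>\<close> by (cases "\<tau> = 0") auto
  have "e < C * \<tau> powr n'"
    using lt Young_inequality_eps[OF \<open>0 < \<epsilon>\<close> \<open>0 \<le> \<tau>\<close>, of t] assms by (simp add: C_def)
  then have "ereal (\<tau> powr n') * enn2ereal (tail \<tau>) < ereal (\<tau> powr n') * ereal C"
    using e by (simp add: E_def mult.commute)
  then have "enn2ereal (tail \<tau>) < ereal C"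
    by (metis ereal_mult_left_mono ereal_less_eq(5) not_le powr_ge_zero)
  then have "tail \<tau> < ennreal C" using \<open>0 < C\<close> by (simp add: less_ennreal.rep_eq)
  then show ?thesis using \<open>0 < \<tau>\<close> lt e \<open>0 < \<epsilon> * t ^ n\<close> unfolding C_def by auto
qed

text \<open>If \<open>B\<close> were not \<open>o(t\<^sup>n)\<close>, then \<open>\<epsilon> t\<^sup>n < B t\<close> for all \<open>t > 0\<close>, and the points of
  \<open>small_tail_point\<close> for small \<open>t\<close> lie below any given \<open>\<tau>\<^sub>1\<close> because \<open>E\<close> grows linearly;
  as \<open>tail\<close> is antitone, it would be bounded.\<close>
lemma assoc_B_little_o:
  assumes "0 < \<epsilon>"
  shows "eventually (\<lambda>t. assoc_B n A t \<le> ereal (\<epsilon> * t ^ n)) (at_right 0)"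
proof (rule ccontr)
  assume "\<not> ?thesis"
  then have large: "ereal (\<epsilon> * t ^ n) < young_conj E t" if "0 < t" for t
    using superhomogeneous.not_little_o_everywhere[OF superhomogeneous_assoc_B _ that]
    by (simp add: assoc_B_eq)
  define C where "C = 1 / ((\<epsilon> * real n) powr (n' / real n) * n')"
  have "tail \<tau>1 \<le> ennreal C" if \<tau>1: "0 < \<tau>1" for \<tau>1
  proof -
    obtain \<eta> where \<eta>: "0 < \<eta>" "\<And>\<tau>. \<tau>1 \<le> \<tau> \<Longrightarrow> ereal (\<eta> * \<tau>) \<le> E \<tau>"
      using E_linear_lower[OF \<tau>1] by auto
    obtain \<tau> where \<tau>: "0 < \<tau>" "E \<tau> < ereal (\<tau> * (\<eta> / 2))" "tail \<tau> < ennreal C"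
      using small_tail_point[OF \<open>0 < \<epsilon>\<close> _ large, of "\<eta> / 2"] \<eta> unfolding C_def by auto
    have "\<tau> < \<tau>1"
    proof (rule ccontr)
      assume "\<not> \<tau> < \<tau>1"
      then have "ereal (\<eta> * \<tau>) < ereal (\<tau> * (\<eta> / 2))" using \<eta>(2) \<tau>(2) by (meson le_less_trans not_less)
      then show False using \<tau> \<eta> by simp
    qed
    then show ?thesis using tail_antimono[of \<tau> \<tau>1] \<tau> by simp
  qed
  then show False using tail_unbounded[of C] by (auto simp: not_less[symmetric])
qed

end

lemma Xi_eq_Xi_of:
  "Xi n A \<phi> = Xi_of (young_inv (assoc_B n A)) (psi_of n (young_inv (assoc_B n A)) \<phi>)"
proof -
  have "J_fun n A \<phi> = J_of n (young_inv (assoc_B n A)) \<phi>"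
    by (simp add: fun_eq_iff J_fun_def J_of_def)
  then show ?thesis
    unfolding Xi_def[abs_def] Xi_of_def[abs_def] assoc_psi_def[abs_def] psi_of_def[abs_def] by simp
qed

theorem lemma4p9:
  fixes n :: nat and A \<phi> :: "real \<Rightarrow> real"
  assumes "n \<ge> 1"
    and "young_fun A" and "cond_C1 n A" and "cond_C2 A" and "cond_C3 n A"
    and "gauge_fun n \<phi>"
  shows "mono_on {0<..} (Xi n A \<phi>)"
proof -
  have "superhomogeneous n (assoc_B n A)
    \<and> (\<forall>\<epsilon>>0. eventually (\<lambda>t. assoc_B n A t \<le> ereal (\<epsilon> * t ^ n)) (at_right 0))"
  proof (cases "n = 1")
    case True
    then show ?thesis using assms superhomogeneous_assoc_B_1 assoc_B_1_little_o by auto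
  next
    case False
    then interpret young_assoc n A using assms by unfold_locales auto
    show ?thesis using superhomogeneous_assoc_B assoc_B_little_o by auto
  qed
  then show ?thesis
    unfolding Xi_eq_Xi_of using superhomogeneous.mono_on_Xi_of_young_inv assms(6) by blast
qed

end
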